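(* Let $\Phi\in[0,2\pi)$ with $\Phi/(2\pi)\notin\mathbb Q$ and let $\theta\in[0,2\pi)$. Then the magnetic walk $W_\Phi$ on $\ell^2(\mathbb Z^2)\otimes\mathbb C^2$ and the unitary critical almost Mathieu operator $\widetilde W_\Phi$ on $\ell^2(\mathbb Z)\otimes\mathbb C^2$ (both defined below) have the same spectrum as subsets of $\mathbb C$: $\sigma(W_\Phi)=\sigma(\widetilde W_\Phi)$.
   Context: Magnetic walk: $\mathcal H=\ell^2(\mathbb Z^2)\otimes\mathbb C^2$ has basis $|x,s\rangle$, $x\in\mathbb Z^2$, $s\in\{\pm1\}$; $T_1|x\rangle=e^{-ix_2\Phi/2}|x+e_1\rangle$, $T_2|x\rangle=e^{ix_1\Phi/2}|x+e_2\rangle$ on $\ell^2(\mathbb Z^2)$; $\mathrm{diag}(T,T^* )$ acts as $T$ on the $s=+1$ component and as $T^*$ on the $s=-1$ component; $C_H=\frac1{\sqrt2}\begin{pmatrix}1&1\\1&-1\end{pmatrix}$ acts on $\mathbb C^2$; $W_\Phi=\mathrm{diag}(T_1,T_1^* )(\mathbb 1\otimes C_H)\mathrm{diag}(T_2,T_2^* )(\mathbb 1\otimes C_H)$. Unitary critical almost Mathieu operator: on $\ell^2(\mathbb Z)\otimes\mathbb C^2$ with basis $|x,s\rangle$, $x\in\mathbb Z$, $s\in\{\pm1\}$, let $S|x,s\rangle=|x+s,s\rangle$ and let $C_2(\Phi)$ act as $|x\rangle\otimes\psi\mapsto|x\rangle\otimes C_2(\Phi,x)\psi$ with $C_2(\Phi,x)=\begin{pmatrix}\cos(\Phi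 x+\theta)&-\sin(\Phi x+\theta)\\ \sin(\Phi x+\theta)&\cos(\Phi x+\theta)\end{pmatrix}$. Then $\widetilde W_\Phi=S\,C_2(\Phi)$. *)

theory Defs
  imports "HOL-Analysis.Analysis"
begin

datatype spin = Up | Down

definition spin_val :: "spin \<Rightarrow> int" where
  "spin_val s = (if s = Up then 1 else -1)"

definition l2 :: "('i \<Rightarrow> complex) set" where
  "l2 = {f. (\<lambda>i. (cmod (f i))\<^sup>2) summable_on UNIV}"

definition l2norm :: "('i \<Rightarrow> complex) \<Rightarrow> real" where
  "l2norm f = sqrt (\<Sum>\<^sub>\<infinity>i. (cmod (f i))\<^sup>2)"

definition op_spectrum :: "(('i \<Rightarrow> complex) \<Rightarrow> ('i \<Rightarrow> complex)) \<Rightarrow> complex set" where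
  "op_spectrum A = {z. \<not> (\<exists>B.
      (\<forall>f\<in>l2. B f \<in> l2) \<and>
      (\<forall>f\<in>l2. \<forall>g\<in>l2. \<forall>a b. B (\<lambda>i. a * f i + b * g i) = (\<lambda>i. a * B f i + b * B g i)) \<and>
      (\<exists>C. \<forall>f\<in>l2. l2norm (B f) \<le> C * l2norm f) \<and>
      (\<forall>f\<in>l2. B (\<lambda>i. A f i - z * f i) = f) \<and>
      (\<forall>f\<in>l2. (\<lambda>i. A (B f) i - z * B f i) = f))}"

(* Magnetic translations on ell^2(Z^2), in coefficient form:
   T1|x> = e^{-i x2 Phi/2}|x+e1>, T2|x> = e^{i x1 Phi/2}|x+e2>, and adjoints. *)
definition T1 :: "real \<Rightarrow> (int \<times> int \<Rightarrow> complex) \<Rightarrow> (int \<times> int \<Rightarrow> complex)" where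
  "T1 \<Phi> \<psi> = (\<lambda>(y1, y2). cis (- (of_int y2 * \<Phi> / 2)) * \<psi> (y1 - 1, y2))"

definition T1adj :: "real \<Rightarrow> (int \<times> int \<Rightarrow> complex) \<Rightarrow> (int \<times> int \<Rightarrow> complex)" where
  "T1adj \<Phi> \<psi> = (\<lambda>(x1, x2). cis (of_int x2 * \<Phi> / 2) * \<psi> (x1 + 1, x2))"

definition T2 :: "real \<Rightarrow> (int \<times> int \<Rightarrow> complex) \<Rightarrow> (int \<times> int \<Rightarrow> complex)" where
  "T2 \<Phi> \<psi> = (\<lambda>(y1, y2). cis (of_int y1 * \<Phi> / 2) * \<psi> (y1, y2 - 1))"

definition T2adj :: "real \<Rightarrow> (int \<times> int \<Rightarrow> complex) \<Rightarrow> (int \<times> int \<Rightarrow> complex)" where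
  "T2adj \<Phi> \<psi> = (\<lambda>(x1, x2). cis (- (of_int x1 * \<Phi> / 2)) * \<psi> (x1, x2 + 1))"

definition diagTT :: "(('x \<Rightarrow> complex) \<Rightarrow> ('x \<Rightarrow> complex)) \<Rightarrow> (('x \<Rightarrow> complex) \<Rightarrow> ('x \<Rightarrow> complex))
    \<Rightarrow> ('x \<times> spin \<Rightarrow> complex) \<Rightarrow> ('x \<times> spin \<Rightarrow> complex)" where
  "diagTT T Tadj \<psi> = (\<lambda>(x, s). if s = Up then T (\<lambda>y. \<psi> (y, Up)) x
                                  else Tadj (\<lambda>y. \<psi> (y, Down)) x)"

definition coinH :: "('x \<times> spin \<Rightarrow> complex) \<Rightarrow> ('x \<times> spin \<Rightarrow> complex)" where
  "coinH \<psi> = (\<lambda>(x, s). if s = Up then (\<psi> (x, Up) + \<psi> (x, Down)) / of_real (sqrt 2)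
                          else (\<psi> (x, Up) - \<psi> (x, Down)) / of_real (sqrt 2))"

definition magW :: "real \<Rightarrow> ((int \<times> int) \<times> spin \<Rightarrow> complex) \<Rightarrow> ((int \<times> int) \<times> spin \<Rightarrow> complex)" where
  "magW \<Phi> = diagTT (T1 \<Phi>) (T1adj \<Phi>) \<circ> coinH \<circ> diagTT (T2 \<Phi>) (T2adj \<Phi>) \<circ> coinH"

definition shiftS :: "(int \<times> spin \<Rightarrow> complex) \<Rightarrow> (int \<times> spin \<Rightarrow> complex)" where
  "shiftS \<psi> = (\<lambda>(y, s). \<psi> (y - spin_val s, s))"

definition coinRot :: "real \<Rightarrow> real \<Rightarrow> (int \<times> spin \<Rightarrow> complex) \<Rightarrow> (int \<times> spin \<Rightarrow> complex)" where
  "coinRot \<Phi> \<theta> \<psi> = (\<lambda>(x, s). let a = \<Phi> * of_int x + \<theta> in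
      if s = Up then of_real (cos a) * \<psi> (x, Up) - of_real (sin a) * \<psi> (x, Down)
      else of_real (sin a) * \<psi> (x, Up) + of_real (cos a) * \<psi> (x, Down))"

definition uamoW :: "real \<Rightarrow> real \<Rightarrow> (int \<times> spin \<Rightarrow> complex) \<Rightarrow> (int \<times> spin \<Rightarrow> complex)" where
  "uamoW \<Phi> \<theta> = shiftS \<circ> coinRot \<Phi> \<theta>"

end

theory Submission
  imports Defs "HOL-Analysis.Kronecker_Approximation_Theorem" "HOL-Real_Asymp.Real_Asymp"
begin

text \<open>Both walks are invertible contractions whose inverses are contractions, and for such an
  operator \<open>z\<close> lies in the spectrum iff \<open>z\<close> is an approximate eigenvalue with finitely supported
  approximate eigenvectors. The gauge \<open>e\<^sup>-\<^sup>i\<^sup>x\<^sup>1\<^sup>x\<^sup>2\<^sup>\<Phi>\<^sup>/\<^sup>2\<close> conjugates \<open>magW \<Phi>\<close> to an operator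
  that couples each row \<open>x\<^sub>2\<close> to its two neighbours through the parts \<open>A\<close>, \<open>B\<close> of
  \<open>uamoW \<Phi> \<theta> = e\<^sup>i\<^sup>\<theta> A + e\<^sup>-\<^sup>i\<^sup>\<theta> B\<close>. Tensoring with a long cut-off plane wave \<open>e\<^sup>-\<^sup>i\<^sup>\<theta>\<^sup>x\<^sup>2\<close>
  turns approximate eigenvectors of \<open>uamoW \<Phi> \<theta>\<close> into approximate eigenvectors of the gauged
  walk; conversely, Parseval for the Fourier transform in \<open>x\<^sub>2\<close> produces from an approximate
  eigenvector of the gauged walk one of \<open>uamoW \<Phi> k\<close> for some phase \<open>k\<close>. Finally, translation by
  \<open>n\<close> shifts the phase by \<open>n\<Phi>\<close>, which is dense modulo \<open>2\<pi>\<close> for irrational \<open>\<Phi>/2\<pi>\<close>, and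
  \<open>uamoW \<Phi> \<theta>\<close> is Lipschitz in \<open>\<theta>\<close>; so its approximate eigenvalues do not depend on \<open>\<theta>\<close>.\<close>

section \<open>Square-summable functions\<close>

lemma sum_sq_le_l2norm_sq:
  assumes "f \<in> l2" "finite F"
  shows "(\<Sum>i\<in>F. (cmod (f i))\<^sup>2) \<le> (l2norm f)\<^sup>2"
proof -
  have s: "(\<lambda>i. (cmod (f i))\<^sup>2) summable_on UNIV" using assms(1) by (simp add: l2_def)
  have "(\<Sum>i\<in>F. (cmod (f i))\<^sup>2) \<le> (\<Sum>\<^sub>\<infinity>i. (cmod (f i))\<^sup>2)"
    by (rule finite_sum_le_infsum[OF s assms(2)]) auto
  moreover have "(\<Sum>\<^sub>\<infinity>i. (cmod (f i))\<^sup>2) \<ge> 0" by (simp add: infsum_nonneg)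
  ultimately show ?thesis by (simp add: l2norm_def)
qed

lemma l2norm_nonneg: "l2norm f \<ge> 0"
  unfolding l2norm_def by (rule real_sqrt_ge_zero, rule infsum_nonneg) simp

lemma l2_l2norm_le_if_sums_bounded:
  assumes "\<And>F. finite F \<Longrightarrow> (\<Sum>i\<in>F. (cmod (g i))\<^sup>2) \<le> K\<^sup>2" "K \<ge> 0"
  shows "g \<in> l2 \<and> l2norm g \<le> K"
proof -
  have s: "(\<lambda>i. (cmod (g i))\<^sup>2) summable_on UNIV"
    by (rule nonneg_bdd_above_summable_on) (use assms(1) in \<open>auto intro!: bdd_aboveI\<close>)
  have "(\<Sum>\<^sub>\<infinity>i. (cmod (g i))\<^sup>2) \<le> K\<^sup>2"
    by (rule infsum_le_finite_sums[OF s]) (use assms in auto)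
  then have "l2norm g \<le> sqrt (K\<^sup>2)" unfolding l2norm_def using real_sqrt_le_mono by blast
  then show ?thesis using s assms(2) by (simp add: l2_def)
qed

lemma cmod_le_l2norm:
  assumes "f \<in> l2" shows "cmod (f i) \<le> l2norm f"
proof -
  have "(\<Sum>j\<in>{i}. (cmod (f j))\<^sup>2) \<le> (l2norm f)\<^sup>2" by (rule sum_sq_le_l2norm_sq[OF assms]) auto
  then have "(cmod (f i))\<^sup>2 \<le> (l2norm f)\<^sup>2" by simp
  then show ?thesis using l2norm_nonneg[of f] by (rule power2_le_imp_le)
qed

lemma l2norm_pos:
  assumes "f \<in> l2" "f i \<noteq> 0" shows "l2norm f > 0"
  using cmod_le_l2norm[OF assms(1), of i] assms(2) by (meson less_le_trans zero_less_norm_iff)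

lemma l2norm_cong_cmod:
  assumes "\<And>i. cmod (f i) = cmod (g i)"
  shows "l2norm f = l2norm g"
  using assms by (simp add: l2norm_def)

lemma l2_finite_support:
  assumes "finite S" "\<And>i. i \<notin> S \<Longrightarrow> f i = 0"
  shows "f \<in> l2" and "l2norm f = sqrt (\<Sum>i\<in>S. (cmod (f i))\<^sup>2)"
proof -
  have "((\<lambda>i. (cmod (f i))\<^sup>2) has_sum (\<Sum>i\<in>S. (cmod (f i))\<^sup>2)) S"
    by (rule has_sum_finiteI[OF assms(1)]) simp
  then have h: "((\<lambda>i. (cmod (f i))\<^sup>2) has_sum (\<Sum>i\<in>S. (cmod (f i))\<^sup>2)) UNIV"
    using has_sum_cong_neutral[of UNIV S "\<lambda>i. (cmod (f i))\<^sup>2" "\<lambda>i. (cmod (f i))\<^sup>2"] assms(2) by auto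
  show "f \<in> l2" using h by (auto simp: l2_def summable_on_def)
  show "l2norm f = sqrt (\<Sum>i\<in>S. (cmod (f i))\<^sup>2)" using h by (simp add: l2norm_def infsumI)
qed

lemma finite_support_l2:
  assumes "finite {i. f i \<noteq> 0}" shows "f \<in> l2"
  using l2_finite_support(1)[OF assms] by auto

lemma l2_zero: "(\<lambda>i. 0) \<in> l2" "l2norm (\<lambda>i. 0) = 0"
  using l2_finite_support[of "{}" "\<lambda>i. 0"] by auto

lemma l2_add:
  assumes "f \<in> l2" "g \<in> l2"
  shows "(\<lambda>i. f i + g i) \<in> l2 \<and> l2norm (\<lambda>i. f i + g i) \<le> l2norm f + l2norm g"
proof (rule l2_l2norm_le_if_sums_bounded)
  fix F :: "'a set" assume F: "finite F"
  have L2_le: "L2_set (\<lambda>i. cmod (h i)) F \<le> l2norm h" if "h \<in> l2" for h :: "'a \<Rightarrow> complex"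
    unfolding L2_set_def using sum_sq_le_l2norm_sq[OF that F] l2norm_nonneg[of h]
    by (simp add: real_le_lsqrt)
  have "L2_set (\<lambda>i. cmod (f i + g i)) F \<le> L2_set (\<lambda>i. cmod (f i) + cmod (g i)) F"
    by (rule L2_set_mono) (auto simp: norm_triangle_ineq)
  also have "\<dots> \<le> L2_set (\<lambda>i. cmod (f i)) F + L2_set (\<lambda>i. cmod (g i)) F"
    by (rule L2_set_triangle_ineq)
  also have "\<dots> \<le> l2norm f + l2norm g"
    using L2_le[OF assms(1)] L2_le[OF assms(2)] by linarith
  finally have "(L2_set (\<lambda>i. cmod (f i + g i)) F)\<^sup>2 \<le> (l2norm f + l2norm g)\<^sup>2"
    by (rule power_mono) (rule L2_set_nonneg)
  also have "(L2_set (\<lambda>i. cmod (f i + g i)) F)\<^sup>2 = (\<Sum>i\<in>F. (cmod (f i + g i))\<^sup>2)"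
    unfolding L2_set_def by (rule real_sqrt_pow2) (simp add: sum_nonneg)
  finally show "(\<Sum>i\<in>F. (cmod (f i + g i))\<^sup>2) \<le> (l2norm f + l2norm g)\<^sup>2" .
qed (simp add: l2norm_nonneg add_nonneg_nonneg)

lemma l2_scale:
  assumes "f \<in> l2"
  shows "(\<lambda>i. c * f i) \<in> l2 \<and> l2norm (\<lambda>i. c * f i) = cmod c * l2norm f"
proof -
  have s: "(\<lambda>i. (cmod (f i))\<^sup>2) summable_on UNIV" using assms by (simp add: l2_def)
  have e: "(\<lambda>i. (cmod (c * f i))\<^sup>2) = (\<lambda>i. (cmod c)\<^sup>2 * (cmod (f i))\<^sup>2)"
    by (simp add: norm_mult power_mult_distrib)
  have "(\<lambda>i. (cmod (c * f i))\<^sup>2) summable_on UNIV"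
    unfolding e using s by (rule summable_on_cmult_right)
  moreover have "(\<Sum>\<^sub>\<infinity>i. (cmod (c * f i))\<^sup>2) = (cmod c)\<^sup>2 * (\<Sum>\<^sub>\<infinity>i. (cmod (f i))\<^sup>2)"
    unfolding e by (rule infsum_cmult_right')
  ultimately show ?thesis unfolding l2_def l2norm_def by (simp add: real_sqrt_mult)
qed

lemma l2_lincomb:
  assumes "f \<in> l2" "g \<in> l2"
  shows "(\<lambda>i. a * f i + b * g i) \<in> l2 \<and>
    l2norm (\<lambda>i. a * f i + b * g i) \<le> cmod a * l2norm f + cmod b * l2norm g"
  using l2_add[of "\<lambda>i. a * f i" "\<lambda>i. b * g i"] l2_scale[OF assms(1), of a] l2_scale[OF assms(2), of b]
  by simp

lemma l2_diff:
  assumes "f \<in> l2" "g \<in> l2"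
  shows "(\<lambda>i. f i - g i) \<in> l2 \<and> l2norm (\<lambda>i. f i - g i) \<le> l2norm f + l2norm g"
  using l2_lincomb[OF assms, of 1 "-1"] by simp

lemma l2_sum:
  assumes "finite S" "\<And>n. n \<in> S \<Longrightarrow> h n \<in> l2"
  shows "(\<lambda>i. \<Sum>n\<in>S. h n i) \<in> l2 \<and> l2norm (\<lambda>i. \<Sum>n\<in>S. h n i) \<le> (\<Sum>n\<in>S. l2norm (h n))"
  using assms
proof (induction S rule: finite_induct)
  case empty then show ?case by (simp add: l2_zero)
next
  case (insert x F)
  then have IH: "(\<lambda>i. \<Sum>n\<in>F. h n i) \<in> l2" "l2norm (\<lambda>i. \<Sum>n\<in>F. h n i) \<le> (\<Sum>n\<in>F. l2norm (h n))"
    by auto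
  then show ?case using insert l2_add[of "h x" "\<lambda>i. \<Sum>n\<in>F. h n i"] by auto
qed

lemma l2_tail_small:
  assumes "f \<in> l2" "\<delta> > 0"
  obtains F where "finite F" "l2norm (\<lambda>i. if i \<in> F then 0 else f i) \<le> \<delta>"
proof -
  have s: "(\<lambda>i. (cmod (f i))\<^sup>2) summable_on UNIV" using assms by (simp add: l2_def)
  define T where "T = (\<Sum>\<^sub>\<infinity>i. (cmod (f i))\<^sup>2)"
  have T: "T = (SUP F\<in>{F. finite F \<and> F \<subseteq> UNIV}. (\<Sum>i\<in>F. (cmod (f i))\<^sup>2))"
    unfolding T_def by (rule infsum_nonneg_is_SUPREMUM_real[OF s]) auto
  have bdd: "bdd_above ((\<lambda>F. \<Sum>i\<in>F. (cmod (f i))\<^sup>2) ` {F. finite F \<and> F \<subseteq> UNIV})"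
    using sum_sq_le_l2norm_sq[OF assms(1)] by (auto intro!: bdd_aboveI)
  have "T - \<delta>\<^sup>2 < T" using assms(2) by simp
  then obtain F where F: "finite F" "T - \<delta>\<^sup>2 < (\<Sum>i\<in>F. (cmod (f i))\<^sup>2)"
    unfolding T by (subst (asm) less_cSUP_iff[OF _ bdd]) auto
  have T_l2norm: "(l2norm f)\<^sup>2 = T"
    unfolding T_def l2norm_def by (rule real_sqrt_pow2, rule infsum_nonneg) simp
  have "(\<lambda>i. if i \<in> F then 0 else f i) \<in> l2 \<and> l2norm (\<lambda>i. if i \<in> F then 0 else f i) \<le> \<delta>"
  proof (rule l2_l2norm_le_if_sums_bounded)
    fix G :: "'a set" assume G: "finite G"
    have "(\<Sum>i\<in>G. (cmod (if i \<in> F then 0 else f i))\<^sup>2) = (\<Sum>i\<in>G - F. (cmod (f i))\<^sup>2)"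
      using G by (intro sum.mono_neutral_cong_right) auto
    also have "\<dots> = (\<Sum>i\<in>(G - F) \<union> F. (cmod (f i))\<^sup>2) - (\<Sum>i\<in>F. (cmod (f i))\<^sup>2)"
      using G F(1) by (subst sum.union_disjoint) auto
    also have "(G - F) \<union> F = G \<union> F" by auto
    also have "(\<Sum>i\<in>G \<union> F. (cmod (f i))\<^sup>2) \<le> T"
      using sum_sq_le_l2norm_sq[OF assms(1), of "G \<union> F"] G F(1) T_l2norm by simp
    finally show "(\<Sum>i\<in>G. (cmod (if i \<in> F then 0 else f i))\<^sup>2) \<le> \<delta>\<^sup>2" using F(2) by linarith
  qed (use assms in simp)
  then show ?thesis using F(1) that by blast
qed

lemma l2_pointwise_limit:
  assumes lim: "\<And>i. (\<lambda>n. F n i) \<longlonglongrightarrow> f i"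
    and bound: "\<And>n. F n \<in> l2 \<and> l2norm (F n) \<le> K" and K: "K \<ge> 0"
  shows "f \<in> l2 \<and> l2norm f \<le> K"
proof (rule l2_l2norm_le_if_sums_bounded[OF _ K])
  fix S :: "'a set" assume S: "finite S"
  have lim_sums: "(\<lambda>n. \<Sum>i\<in>S. (cmod (F n i))\<^sup>2) \<longlonglongrightarrow> (\<Sum>i\<in>S. (cmod (f i))\<^sup>2)"
    by (intro tendsto_sum tendsto_power tendsto_norm lim)
  have sums_bounded: "(\<Sum>i\<in>S. (cmod (F n i))\<^sup>2) \<le> K\<^sup>2" for n
  proof -
    have "(\<Sum>i\<in>S. (cmod (F n i))\<^sup>2) \<le> (l2norm (F n))\<^sup>2" using sum_sq_le_l2norm_sq[OF _ S] bound by blast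
    also have "\<dots> \<le> K\<^sup>2" by (rule power_mono) (use bound l2norm_nonneg in auto)
    finally show ?thesis .
  qed
  show "(\<Sum>i\<in>S. (cmod (f i))\<^sup>2) \<le> K\<^sup>2"
    by (rule LIMSEQ_le_const2[OF lim_sums]) (use sums_bounded in auto)
qed

section \<open>Regular operators and their resolvents\<close>

definition linear_op :: "(('i \<Rightarrow> complex) \<Rightarrow> ('i \<Rightarrow> complex)) \<Rightarrow> bool" where
  "linear_op A \<longleftrightarrow> (\<forall>f g a b. A (\<lambda>i. a * f i + b * g i) = (\<lambda>i. a * A f i + b * A g i))"

definition l2_contraction :: "(('i \<Rightarrow> complex) \<Rightarrow> ('j \<Rightarrow> complex)) \<Rightarrow> bool" where
  "l2_contraction A \<longleftrightarrow> (\<forall>f\<in>l2. A f \<in> l2 \<and> l2norm (A f) \<le> l2norm f)"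

definition pointwise_continuous :: "(('i \<Rightarrow> complex) \<Rightarrow> ('j \<Rightarrow> complex)) \<Rightarrow> bool" where
  "pointwise_continuous A \<longleftrightarrow>
     (\<forall>F f. (\<forall>i. (\<lambda>n. F n i) \<longlonglongrightarrow> f i) \<longrightarrow> (\<forall>j. (\<lambda>n. A (F n) j) \<longlonglongrightarrow> A f j))"

text \<open>Pointwise continuity lets an operator commute with the pointwise limits through which
  resolvents are constructed below; all operators occurring in the theorem are local
  (finitely many coordinates of the input determine each coordinate of the output).\<close>

definition regular_op :: "(('i \<Rightarrow> complex) \<Rightarrow> ('i \<Rightarrow> complex)) \<Rightarrow> bool" where
  "regular_op A \<longleftrightarrow> linear_op A \<and> l2_contraction A \<and> pointwise_continuous A"

definition minus_scalar :: "(('i \<Rightarrow> complex) \<Rightarrow> ('i \<Rightarrow> complex)) \<Rightarrow> complex \<Rightarrow> ('i \<Rightarrow> complex) \<Rightarrow> ('i \<Rightarrow> complex)" where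
  "minus_scalar A z f = (\<lambda>i. A f i - z * f i)"

definition resolvent_op ::
  "(('i \<Rightarrow> complex) \<Rightarrow> ('i \<Rightarrow> complex)) \<Rightarrow> complex \<Rightarrow> (('i \<Rightarrow> complex) \<Rightarrow> ('i \<Rightarrow> complex)) \<Rightarrow> bool" where
  "resolvent_op A z B \<longleftrightarrow>
     (\<forall>f\<in>l2. B f \<in> l2) \<and>
     (\<forall>f\<in>l2. \<forall>g\<in>l2. \<forall>a b. B (\<lambda>i. a * f i + b * g i) = (\<lambda>i. a * B f i + b * B g i)) \<and>
     (\<exists>C. \<forall>f\<in>l2. l2norm (B f) \<le> C * l2norm f) \<and>
     (\<forall>f\<in>l2. B (minus_scalar A z f) = f) \<and> (\<forall>f\<in>l2. minus_scalar A z (B f) = f)"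

definition finite_approx_eigenvalue :: "(('i \<Rightarrow> complex) \<Rightarrow> ('i \<Rightarrow> complex)) \<Rightarrow> complex \<Rightarrow> bool" where
  "finite_approx_eigenvalue A z \<longleftrightarrow>
     (\<forall>\<epsilon>>0. \<exists>f. finite {i. f i \<noteq> 0} \<and> (\<exists>i. f i \<noteq> 0) \<and> l2norm (minus_scalar A z f) \<le> \<epsilon> * l2norm f)"

lemma not_in_op_spectrum_iff: "z \<notin> op_spectrum A \<longleftrightarrow> (\<exists>B. resolvent_op A z B)"
  unfolding op_spectrum_def resolvent_op_def minus_scalar_def by blast

lemma resolvent_opI:
  assumes "\<And>f. f \<in> l2 \<Longrightarrow> B f \<in> l2"
    and "\<And>f g a b. f \<in> l2 \<Longrightarrow> g \<in> l2 \<Longrightarrow> B (\<lambda>i. a * f i + b * g i) = (\<lambda>i. a * B f i + b * B g i)"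
    and "\<And>f. f \<in> l2 \<Longrightarrow> l2norm (B f) \<le> C * l2norm f"
    and "\<And>f. f \<in> l2 \<Longrightarrow> B (minus_scalar A z f) = f"
    and "\<And>f. f \<in> l2 \<Longrightarrow> minus_scalar A z (B f) = f"
  shows "resolvent_op A z B"
  using assms unfolding resolvent_op_def by blast

lemma resolvent_opD:
  assumes "resolvent_op A z B"
  shows "\<And>f. f \<in> l2 \<Longrightarrow> B f \<in> l2"
    and "\<And>f g a b. f \<in> l2 \<Longrightarrow> g \<in> l2 \<Longrightarrow> B (\<lambda>i. a * f i + b * g i) = (\<lambda>i. a * B f i + b * B g i)"
    and "\<exists>C. \<forall>f\<in>l2. l2norm (B f) \<le> C * l2norm f"
    and "\<And>f. f \<in> l2 \<Longrightarrow> B (minus_scalar A z f) = f"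
    and "\<And>f. f \<in> l2 \<Longrightarrow> minus_scalar A z (B f) = f"
  using assms unfolding resolvent_op_def by blast+

lemma linear_opD: "linear_op A \<Longrightarrow> A (\<lambda>i. a * f i + b * g i) = (\<lambda>i. a * A f i + b * A g i)"
  unfolding linear_op_def by blast

lemma linear_op_zero: "linear_op A \<Longrightarrow> A (\<lambda>i. 0) = (\<lambda>i. 0)"
  using linear_opD[of A 0 "\<lambda>i. 0" 0 "\<lambda>i. 0"] by simp

lemma linear_op_diff: "linear_op A \<Longrightarrow> A (\<lambda>i. f i - g i) = (\<lambda>i. A f i - A g i)"
  using linear_opD[of A 1 f "-1" g] by simp

lemma linear_op_scale: "linear_op A \<Longrightarrow> A (\<lambda>i. c * f i) = (\<lambda>i. c * A f i)"
  using linear_opD[of A c f 0 f] by simp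

lemma linear_op_sum:
  assumes "linear_op A" "finite S"
  shows "A (\<lambda>i. \<Sum>n\<in>S. h n i) = (\<lambda>i. \<Sum>n\<in>S. A (h n) i)"
  using assms(2)
proof (induction S rule: finite_induct)
  case empty then show ?case using linear_op_zero[OF assms(1)] by simp
next
  case (insert x F)
  then show ?case using linear_opD[OF assms(1), of 1 "h x" 1 "\<lambda>i. \<Sum>n\<in>F. h n i"] by simp
qed

lemma l2_contractionD:
  assumes "l2_contraction A" "f \<in> l2" shows "A f \<in> l2" "l2norm (A f) \<le> l2norm f"
  using assms unfolding l2_contraction_def by auto

lemma pointwise_continuousD:
  assumes "pointwise_continuous A" "\<And>i. (\<lambda>n. F n i) \<longlonglongrightarrow> f i"
  shows "(\<lambda>n. A (F n) j) \<longlonglongrightarrow> A f j"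
  using assms unfolding pointwise_continuous_def by blast

lemma regular_opD:
  assumes "regular_op A"
  shows "linear_op A" "l2_contraction A" "pointwise_continuous A"
  using assms unfolding regular_op_def by auto

lemma regular_op_comp: "regular_op A \<Longrightarrow> regular_op B \<Longrightarrow> regular_op (A \<circ> B)"
  unfolding regular_op_def linear_op_def l2_contraction_def pointwise_continuous_def
  by (simp, meson order.trans)

lemma regular_op_funpow: "regular_op A \<Longrightarrow> regular_op (A ^^ n)"
proof (induction n)
  case 0 show ?case unfolding regular_op_def linear_op_def l2_contraction_def pointwise_continuous_def by simp
next
  case (Suc n) then show ?case using regular_op_comp[of A "A ^^ n"] by (simp only: funpow.simps)
qed

lemma minus_scalar_l2:
  assumes "l2_contraction A" "f \<in> l2"
  shows "minus_scalar A z f \<in> l2" "l2norm (minus_scalar A z f) \<le> (1 + cmod z) * l2norm f"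
proof -
  have Af: "A f \<in> l2" "l2norm (A f) \<le> l2norm f" using l2_contractionD[OF assms] by auto
  then show "minus_scalar A z f \<in> l2" "l2norm (minus_scalar A z f) \<le> (1 + cmod z) * l2norm f"
    using l2_lincomb[OF Af(1) assms(2), of 1 "- z"] by (auto simp: minus_scalar_def algebra_simps)
qed

lemma minus_scalar_lincomb:
  assumes "linear_op A"
  shows "minus_scalar A z (\<lambda>i. a * f i + b * g i) = (\<lambda>i. a * minus_scalar A z f i + b * minus_scalar A z g i)"
  using linear_opD[OF assms] by (simp add: minus_scalar_def algebra_simps)

section \<open>The spectrum of an invertible regular operator\<close>

lemma not_in_op_spectrum_of_approx_inverses:
  fixes U :: "('i \<Rightarrow> complex) \<Rightarrow> ('i \<Rightarrow> complex)" and R :: "nat \<Rightarrow> ('i \<Rightarrow> complex) \<Rightarrow> ('i \<Rightarrow> complex)"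
  assumes U: "regular_op U" and M: "M \<ge> 0"
    and R_l2: "\<And>n g. g \<in> l2 \<Longrightarrow> R n g \<in> l2 \<and> l2norm (R n g) \<le> M * l2norm g"
    and R_lin: "\<And>n f g a b. f \<in> l2 \<Longrightarrow> g \<in> l2 \<Longrightarrow>
      R n (\<lambda>i. a * f i + b * g i) = (\<lambda>i. a * R n f i + b * R n g i)"
    and R_conv: "\<And>g i. g \<in> l2 \<Longrightarrow> convergent (\<lambda>n. R n g i)"
    and right_inv: "\<And>g i. g \<in> l2 \<Longrightarrow> (\<lambda>n. minus_scalar U z (R n g) i) \<longlonglongrightarrow> g i"
    and left_inv: "\<And>f i. f \<in> l2 \<Longrightarrow> (\<lambda>n. R n (minus_scalar U z f) i) \<longlonglongrightarrow> f i"
  shows "z \<notin> op_spectrum U"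
proof -
  define B where "B g = (\<lambda>i. lim (\<lambda>n. R n g i))" for g
  have conv: "(\<lambda>n. R n g i) \<longlonglongrightarrow> B g i" if "g \<in> l2" for g i
    using R_conv[OF that, of i] unfolding B_def by (simp add: convergent_LIMSEQ_iff)
  have B_l2: "B g \<in> l2 \<and> l2norm (B g) \<le> M * l2norm g" if g: "g \<in> l2" for g
    by (rule l2_pointwise_limit[OF conv[OF g] R_l2[OF g]]) (use M l2norm_nonneg[of g] in simp)
  have "resolvent_op U z B"
  proof (rule resolvent_opI)
    show "B f \<in> l2" "l2norm (B f) \<le> M * l2norm f" if "f \<in> l2" for f using B_l2[OF that] by auto
  next
    fix f g :: "'i \<Rightarrow> complex" and a b :: complex assume f: "f \<in> l2" and g: "g \<in> l2"
    have fg: "(\<lambda>i. a * f i + b * g i) \<in> l2" using l2_lincomb[OF f g] by blast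
    show "B (\<lambda>i. a * f i + b * g i) = (\<lambda>i. a * B f i + b * B g i)"
    proof
      fix i
      have "(\<lambda>n. R n (\<lambda>i. a * f i + b * g i) i) \<longlonglongrightarrow> a * B f i + b * B g i"
        unfolding R_lin[OF f g] by (intro tendsto_intros conv f g)
      with conv[OF fg] show "B (\<lambda>i. a * f i + b * g i) i = a * B f i + b * B g i"
        by (rule LIMSEQ_unique)
    qed
  next
    fix f :: "'i \<Rightarrow> complex" assume f: "f \<in> l2"
    show "B (minus_scalar U z f) = f"
      using LIMSEQ_unique[OF conv[OF minus_scalar_l2(1)[OF regular_opD(2)[OF U] f]] left_inv[OF f]]
      by blast
  next
    fix f :: "'i \<Rightarrow> complex" assume f: "f \<in> l2"
    show "minus_scalar U z (B f) = f"
    proof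
      fix i
      have "(\<lambda>n. U (R n f) i) \<longlonglongrightarrow> U (B f) i"
        by (rule pointwise_continuousD[OF regular_opD(3)[OF U] conv[OF f]])
      then have "(\<lambda>n. minus_scalar U z (R n f) i) \<longlonglongrightarrow> minus_scalar U z (B f) i"
        unfolding minus_scalar_def by (intro tendsto_intros conv[OF f])
      then show "minus_scalar U z (B f) i = f i" using right_inv[OF f] by (rule LIMSEQ_unique)
    qed
  qed
  then show ?thesis by (auto simp: not_in_op_spectrum_iff)
qed

lemma cmod_funpow_le_l2norm:
  assumes "regular_op U" "g \<in> l2"
  shows "cmod ((U ^^ n) g i) \<le> l2norm g"
  using cmod_le_l2norm l2_contractionD[OF regular_opD(2)[OF regular_op_funpow[OF assms(1)]] assms(2)]
  by (meson order.trans)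

definition neumann_partial_sum ::
  "(('i \<Rightarrow> complex) \<Rightarrow> ('i \<Rightarrow> complex)) \<Rightarrow> complex \<Rightarrow> nat \<Rightarrow> ('i \<Rightarrow> complex) \<Rightarrow> ('i \<Rightarrow> complex)" where
  "neumann_partial_sum U w N g = (\<lambda>i. \<Sum>n<N. (- 1 / w ^ Suc n) * (U ^^ n) g i)"

lemma neumann_partial_sum_l2:
  assumes U: "regular_op U" and w: "cmod w > 1" and g: "g \<in> l2"
  shows "neumann_partial_sum U w N g \<in> l2 \<and>
    l2norm (neumann_partial_sum U w N g) \<le> 1 / (cmod w - 1) * l2norm g"
proof -
  have P: "(U ^^ n) g \<in> l2" "l2norm ((U ^^ n) g) \<le> l2norm g" for n
    using l2_contractionD[OF regular_opD(2)[OF regular_op_funpow[OF U]] g] by auto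
  have geometric: "(\<Sum>n<N. (1 / cmod w) ^ Suc n) \<le> 1 / (cmod w - 1)"
  proof -
    have w0: "w \<noteq> 0" using w by auto
    have "(\<Sum>n<N. (1 / cmod w) ^ Suc n) = (1 / cmod w) * (\<Sum>n<N. (1 / cmod w) ^ n)"
      by (simp add: sum_distrib_left)
    also have "\<dots> \<le> (1 / cmod w) * (1 / (1 - 1 / cmod w))"
      using geometric_sum_less[of "1 / cmod w" "{..<N}"] w w0
      by (intro mult_left_mono) (auto simp: less_imp_le)
    also have "\<dots> = 1 / (cmod w - 1)" using w w0 by (simp add: field_simps)
    finally show ?thesis .
  qed
  have "neumann_partial_sum U w N g \<in> l2 \<and>
      l2norm (neumann_partial_sum U w N g) \<le> (\<Sum>n<N. l2norm (\<lambda>i. (- 1 / w ^ Suc n) * (U ^^ n) g i))"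
    unfolding neumann_partial_sum_def by (rule l2_sum) (use l2_scale[OF P(1)] in blast)+
  moreover have "(\<Sum>n<N. l2norm (\<lambda>i. (- 1 / w ^ Suc n) * (U ^^ n) g i)) \<le> (\<Sum>n<N. (1 / cmod w) ^ Suc n * l2norm g)"
  proof (rule sum_mono)
    fix n
    have "cmod (- 1 / w ^ Suc n) = (1 / cmod w) ^ Suc n"
      by (simp add: norm_divide norm_power power_one_over del: power_Suc)
    then have "l2norm (\<lambda>i. (- 1 / w ^ Suc n) * (U ^^ n) g i) = (1 / cmod w) ^ Suc n * l2norm ((U ^^ n) g)"
      using l2_scale[OF P(1), of "- 1 / w ^ Suc n" n] by simp
    also have "\<dots> \<le> (1 / cmod w) ^ Suc n * l2norm g" by (rule mult_left_mono[OF P(2)]) simp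
    finally show "l2norm (\<lambda>i. (- 1 / w ^ Suc n) * (U ^^ n) g i) \<le> (1 / cmod w) ^ Suc n * l2norm g" .
  qed
  moreover have "(\<Sum>n<N. (1 / cmod w) ^ Suc n * l2norm g) \<le> 1 / (cmod w - 1) * l2norm g"
    unfolding sum_distrib_right[symmetric] by (rule mult_right_mono[OF geometric l2norm_nonneg])
  ultimately show ?thesis by linarith
qed

lemma neumann_partial_sum_lincomb:
  assumes "regular_op U"
  shows "neumann_partial_sum U w N (\<lambda>i. a * f i + b * g i) =
    (\<lambda>i. a * neumann_partial_sum U w N f i + b * neumann_partial_sum U w N g i)"
  using linear_opD[OF regular_opD(1)[OF regular_op_funpow[OF assms]]]
  unfolding neumann_partial_sum_def
  by (simp add: sum_distrib_left sum.distrib sum_subtractf sum_negf algebra_simps)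

lemma neumann_partial_sum_convergent:
  assumes U: "regular_op U" and w: "cmod w > 1" and g: "g \<in> l2"
  shows "convergent (\<lambda>N. neumann_partial_sum U w N g i)"
proof -
  have "summable (\<lambda>n. (- 1 / w ^ Suc n) * (U ^^ n) g i)"
  proof (rule summable_comparison_test)
    show "\<exists>N. \<forall>n\<ge>N. norm ((- 1 / w ^ Suc n) * (U ^^ n) g i) \<le> l2norm g * (1 / cmod w) ^ Suc n"
      using cmod_funpow_le_l2norm[OF U g]
      by (auto simp: norm_mult norm_divide norm_power power_one_over mult.commute
          simp del: power_Suc intro!: divide_right_mono)
    have "summable (\<lambda>n. (l2norm g * (1 / cmod w)) * (1 / cmod w) ^ n)"
      by (rule summable_mult[OF summable_geometric]) (use w in \<open>simp add: divide_less_eq\<close>)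
    then show "summable (\<lambda>n. l2norm g * (1 / cmod w) ^ Suc n)" by (simp add: mult.assoc)
  qed
  then show ?thesis unfolding neumann_partial_sum_def using summable_LIMSEQ convergentI by blast
qed

lemma neumann_telescope:
  fixes w :: complex
  assumes "w \<noteq> 0"
  shows "(\<Sum>n<N. (- 1 / w ^ Suc n) * (P (Suc n) - w * P n)) = P 0 - P N / w ^ N"
proof -
  have "(\<Sum>n<N. (- 1 / w ^ Suc n) * (P (Suc n) - w * P n)) = (\<Sum>n<N. P n / w ^ n - P (Suc n) / w ^ Suc n)"
    by (rule sum.cong) (use assms in \<open>auto simp: field_simps\<close>)
  also have "\<dots> = P 0 / w ^ 0 - P N / w ^ N" by (rule sum_lessThan_telescope')
  finally show ?thesis by simp
qed

lemma neumann_partial_sum_inverse: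
  assumes U: "regular_op U" and w: "w \<noteq> 0"
  shows "minus_scalar U w (neumann_partial_sum U w N g) = (\<lambda>i. g i - (U ^^ N) g i / w ^ N)"
    and "neumann_partial_sum U w N (minus_scalar U w g) = (\<lambda>i. g i - (U ^^ N) g i / w ^ N)"
proof -
  have U_sum: "U (neumann_partial_sum U w N g) = (\<lambda>i. \<Sum>n<N. (- 1 / w ^ Suc n) * (U ^^ Suc n) g i)"
    unfolding neumann_partial_sum_def linear_op_sum[OF regular_opD(1)[OF U] finite_lessThan]
      linear_op_scale[OF regular_opD(1)[OF U]] by simp
  show "minus_scalar U w (neumann_partial_sum U w N g) = (\<lambda>i. g i - (U ^^ N) g i / w ^ N)"
  proof
    fix i
    have "minus_scalar U w (neumann_partial_sum U w N g) i =
        (\<Sum>n<N. (- 1 / w ^ Suc n) * ((U ^^ Suc n) g i - w * (U ^^ n) g i))"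
      unfolding minus_scalar_def U_sum unfolding neumann_partial_sum_def
      by (simp only: sum_distrib_left right_diff_distrib sum_subtractf mult.left_commute)
    also have "\<dots> = g i - (U ^^ N) g i / w ^ N"
      unfolding neumann_telescope[OF w, of "\<lambda>n. (U ^^ n) g i" N] by simp
    finally show "minus_scalar U w (neumann_partial_sum U w N g) i = g i - (U ^^ N) g i / w ^ N" .
  qed
  have "(U ^^ n) (minus_scalar U w g) = (\<lambda>i. (U ^^ Suc n) g i - w * (U ^^ n) g i)" for n
    using linear_opD[OF regular_opD(1)[OF regular_op_funpow[OF U]], of n 1 "U g" "- w" g]
    by (simp add: minus_scalar_def funpow_Suc_right del: funpow.simps)
  then show "neumann_partial_sum U w N (minus_scalar U w g) = (\<lambda>i. g i - (U ^^ N) g i / w ^ N)"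
    using neumann_telescope[OF w, of "\<lambda>n. (U ^^ n) g i" N for i]
    by (simp add: neumann_partial_sum_def del: funpow.simps)
qed

lemma neumann_remainder_tendsto:
  assumes U: "regular_op U" and w: "cmod w > 1" and g: "g \<in> l2"
  shows "(\<lambda>N. g i - (U ^^ N) g i / w ^ N) \<longlonglongrightarrow> g i"
proof -
  have "(\<lambda>N. (U ^^ N) g i / w ^ N) \<longlonglongrightarrow> 0"
  proof (rule Lim_null_comparison)
    show "\<forall>\<^sub>F N in sequentially. norm ((U ^^ N) g i / w ^ N) \<le> l2norm g * (1 / cmod w) ^ N"
      using cmod_funpow_le_l2norm[OF U g]
      by (auto simp: norm_divide norm_power power_one_over divide_right_mono intro!: always_eventually)
    show "(\<lambda>N. l2norm g * (1 / cmod w) ^ N) \<longlonglongrightarrow> 0"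
      by (rule tendsto_mult_right_zero, rule LIMSEQ_power_zero) (use w in \<open>simp add: divide_less_eq\<close>)
  qed
  then show ?thesis using tendsto_diff[OF tendsto_const[of "g i"]] by fastforce
qed

lemma not_in_op_spectrum_outside_unit_disc:
  assumes U: "regular_op U" and w: "cmod w > 1"
  shows "w \<notin> op_spectrum U"
proof (rule not_in_op_spectrum_of_approx_inverses[OF U, of "1 / (cmod w - 1)" "neumann_partial_sum U w"])
  have w0: "w \<noteq> 0" using w by auto
  show "0 \<le> 1 / (cmod w - 1)" using w by simp
  show "\<And>n g. g \<in> l2 \<Longrightarrow> neumann_partial_sum U w n g \<in> l2 \<and>
      l2norm (neumann_partial_sum U w n g) \<le> 1 / (cmod w - 1) * l2norm g"
    by (rule neumann_partial_sum_l2[OF U w])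
  show "\<And>n f g a b. neumann_partial_sum U w n (\<lambda>i. a * f i + b * g i) =
      (\<lambda>i. a * neumann_partial_sum U w n f i + b * neumann_partial_sum U w n g i)"
    by (rule neumann_partial_sum_lincomb[OF U])
  show "\<And>g i. g \<in> l2 \<Longrightarrow> convergent (\<lambda>n. neumann_partial_sum U w n g i)"
    by (rule neumann_partial_sum_convergent[OF U w])
  show "\<And>g i. g \<in> l2 \<Longrightarrow> (\<lambda>n. minus_scalar U w (neumann_partial_sum U w n g) i) \<longlonglongrightarrow> g i"
    unfolding neumann_partial_sum_inverse[OF U w0] by (rule neumann_remainder_tendsto[OF U w])
  show "\<And>f i. f \<in> l2 \<Longrightarrow> (\<lambda>n. neumann_partial_sum U w n (minus_scalar U w f) i) \<longlonglongrightarrow> f i"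
    unfolding neumann_partial_sum_inverse[OF U w0] by (rule neumann_remainder_tendsto[OF U w])
qed

lemma in_op_spectrum_if_finite_approx_eigenvalue:
  assumes U: "l2_contraction U" and ae: "finite_approx_eigenvalue U z"
  shows "z \<in> op_spectrum U"
proof (rule ccontr)
  assume "z \<notin> op_spectrum U"
  then obtain B where B: "resolvent_op U z B" by (auto simp: not_in_op_spectrum_iff)
  obtain C where C: "\<And>f. f \<in> l2 \<Longrightarrow> l2norm (B f) \<le> C * l2norm f" using resolvent_opD(3)[OF B] by blast
  define \<epsilon> where "\<epsilon> = 1 / (2 * (\<bar>C\<bar> + 1))"
  have \<epsilon>: "\<epsilon> > 0" by (simp add: \<epsilon>_def add_pos_nonneg)
  obtain f i0 where f: "finite {i. f i \<noteq> 0}" "f i0 \<noteq> 0" "l2norm (minus_scalar U z f) \<le> \<epsilon> * l2norm f"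
    using ae \<epsilon> unfolding finite_approx_eigenvalue_def by blast
  have f_l2: "f \<in> l2" by (rule finite_support_l2[OF f(1)])
  have "l2norm f = l2norm (B (minus_scalar U z f))" using resolvent_opD(4)[OF B f_l2] by simp
  also have "\<dots> \<le> \<bar>C\<bar> * l2norm (minus_scalar U z f)"
    using C[OF minus_scalar_l2(1)[OF U f_l2]] by (meson abs_ge_self l2norm_nonneg mult_right_mono order.trans)
  also have "\<dots> \<le> \<bar>C\<bar> * (\<epsilon> * l2norm f)" by (rule mult_left_mono[OF f(3)]) simp
  also have "\<dots> = (\<bar>C\<bar> / (2 * (\<bar>C\<bar> + 1))) * l2norm f" by (simp add: \<epsilon>_def)
  also have "\<dots> \<le> (1 / 2) * l2norm f" by (rule mult_right_mono) (auto simp: l2norm_nonneg field_simps)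
  finally show False using l2norm_pos[OF f_l2 f(2)] by simp
qed

text \<open>Boundedness below on finitely supported vectors extends to \<open>\<ell>\<^sup>2\<close>, because the tail of
  an \<open>\<ell>\<^sup>2\<close> vector is small and \<open>U - z\<close> is bounded.\<close>

lemma bounded_below_of_finite_support:
  assumes U: "linear_op U" "l2_contraction U" and c: "c \<ge> 0"
    and below: "\<And>f. finite {i. f i \<noteq> 0} \<Longrightarrow> c * l2norm f \<le> l2norm (minus_scalar U z f)"
    and f: "f \<in> l2"
  shows "c * l2norm f \<le> l2norm (minus_scalar U z f)"
proof (rule field_le_epsilon)
  fix e :: real assume e: "e > 0"
  define \<delta> where "\<delta> = e / (c + 1 + cmod z)"
  have \<delta>: "\<delta> > 0" using e c by (simp add: \<delta>_def add_pos_nonneg)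
  obtain F where F: "finite F" "l2norm (\<lambda>i. if i \<in> F then 0 else f i) \<le> \<delta>"
    using l2_tail_small[OF f \<delta>] by blast
  define t where "t = (\<lambda>i. if i \<in> F then 0 else f i)"
  define g where "g = (\<lambda>i. if i \<in> F then f i else 0)"
  have g_fin: "finite {i. g i \<noteq> 0}" using F(1) by (rule rev_finite_subset) (auto simp: g_def)
  have g_l2: "g \<in> l2" by (rule finite_support_l2[OF g_fin])
  have t_eq: "t = (\<lambda>i. f i - g i)" by (auto simp: t_def g_def)
  have t_l2: "t \<in> l2" unfolding t_eq using l2_diff[OF f g_l2] by auto
  have t_small: "l2norm t \<le> \<delta>" using F(2) by (simp add: t_def)
  have "l2norm f \<le> l2norm g + l2norm t"
    using l2_add[OF g_l2 t_l2] by (simp add: t_eq)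
  have "minus_scalar U z g = (\<lambda>i. minus_scalar U z f i - minus_scalar U z t i)"
    using minus_scalar_lincomb[OF U(1), of z 1 f "-1" g] by (simp add: t_eq)
  then have "l2norm (minus_scalar U z g) \<le> l2norm (minus_scalar U z f) + l2norm (minus_scalar U z t)"
    using l2_diff[OF minus_scalar_l2(1)[OF U(2) f] minus_scalar_l2(1)[OF U(2) t_l2]] by simp
  moreover have "l2norm (minus_scalar U z t) \<le> (1 + cmod z) * \<delta>"
    using minus_scalar_l2(2)[OF U(2) t_l2, of z] mult_left_mono[OF t_small, of "1 + cmod z"] by simp
  moreover have "c * l2norm g \<le> l2norm (minus_scalar U z g)" by (rule below[OF g_fin])
  moreover have "c * l2norm f \<le> c * l2norm g + c * \<delta>"
    using mult_left_mono[OF \<open>l2norm f \<le> l2norm g + l2norm t\<close> c] mult_left_mono[OF t_small c]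
    by (simp add: algebra_simps)
  moreover have "c * \<delta> + (1 + cmod z) * \<delta> = e"
  proof -
    have "c + 1 + cmod z \<noteq> 0" using c norm_ge_zero[of z] by linarith
    moreover have "c * \<delta> + (1 + cmod z) * \<delta> = (c + 1 + cmod z) * \<delta>" by (simp add: algebra_simps)
    ultimately show ?thesis by (simp add: \<delta>_def)
  qed
  ultimately show "c * l2norm f \<le> l2norm (minus_scalar U z f) + e" by linarith
qed

text \<open>For \<open>V = U\<^sup>-\<^sup>1\<close> and \<open>w z = 1\<close> one has \<open>U - z = -z U (V - w)\<close>, so a resolvent of \<open>V\<close>
  at \<open>w\<close> yields one of \<open>U\<close> at \<open>z\<close>.\<close>

lemma resolvent_op_via_inverse:
  assumes U: "regular_op U" and V: "regular_op V"
    and UV: "\<And>f. U (V f) = f" and VU: "\<And>f. V (U f) = f"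
    and wz1: "w * z = 1" and B': "resolvent_op V w B'"
  shows "resolvent_op U z (\<lambda>g i. - w * B' (V g) i)"
proof -
  have wz: "w * (z * x) = x" "z * (w * x) = x" for x
    using wz1 by (simp_all add: mult.assoc[symmetric] mult.commute[of z w])
  have lU: "linear_op U" and lV: "linear_op V" and cV: "l2_contraction V"
    using U V regular_opD by auto
  have V_l2: "V f \<in> l2" "l2norm (V f) \<le> l2norm f" if "f \<in> l2" for f
    using l2_contractionD[OF cV that] by auto
  obtain C where C: "\<And>f. f \<in> l2 \<Longrightarrow> l2norm (B' f) \<le> C * l2norm f" using resolvent_opD(3)[OF B'] by blast
  define B where "B g = (\<lambda>i. - w * B' (V g) i)" for g
  have "resolvent_op U z B"
  proof (rule resolvent_opI)
    fix f :: "'a \<Rightarrow> complex" assume f: "f \<in> l2"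
    have B'V: "B' (V f) \<in> l2" by (rule resolvent_opD(1)[OF B' V_l2(1)[OF f]])
    show "B f \<in> l2" unfolding B_def using l2_scale[OF B'V] by blast
    have "l2norm (B f) = cmod w * l2norm (B' (V f))" unfolding B_def using l2_scale[OF B'V, of "- w"] by simp
    also have "\<dots> \<le> cmod w * (\<bar>C\<bar> * l2norm (V f))"
      using C[OF V_l2(1)[OF f]] by (intro mult_left_mono)
        (auto intro: order.trans[OF _ mult_right_mono[OF abs_ge_self l2norm_nonneg]])
    also have "\<dots> \<le> cmod w * (\<bar>C\<bar> * l2norm f)"
      using V_l2(2)[OF f] by (intro mult_left_mono) auto
    finally show "l2norm (B f) \<le> cmod w * \<bar>C\<bar> * l2norm f" by simp
  next
    fix f g :: "'a \<Rightarrow> complex" and a b :: complex assume f: "f \<in> l2" and g: "g \<in> l2"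
    show "B (\<lambda>i. a * f i + b * g i) = (\<lambda>i. a * B f i + b * B g i)"
      unfolding B_def linear_opD[OF lV] using resolvent_opD(2)[OF B' V_l2(1)[OF f] V_l2(1)[OF g]]
      by (simp add: algebra_simps)
  next
    fix f :: "'a \<Rightarrow> complex" assume f: "f \<in> l2"
    have Vf: "(\<lambda>i. V f i - w * f i) \<in> l2" using l2_lincomb[OF V_l2(1)[OF f] f, of 1 "- w"] by simp
    have "V (minus_scalar U z f) = (\<lambda>i. (- z) * (V f i - w * f i) + 0 * f i)"
      using linear_opD[OF lV, of 1 "U f" "- z" f] VU by (simp add: minus_scalar_def algebra_simps wz)
    then have "B' (V (minus_scalar U z f)) = (\<lambda>i. (- z) * f i)"
      using resolvent_opD(2)[OF B' Vf f, of "- z" 0] resolvent_opD(4)[OF B' f]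
      by (simp add: minus_scalar_def)
    then show "B (minus_scalar U z f) = f" unfolding B_def by (simp add: wz)
  next
    fix g :: "'a \<Rightarrow> complex" assume g: "g \<in> l2"
    define h where "h = B' (V g)"
    have "minus_scalar V w h = V g" unfolding h_def by (rule resolvent_opD(5)[OF B' V_l2(1)[OF g]])
    then have "U (minus_scalar V w h) = g" by (simp add: UV)
    moreover have "U (minus_scalar V w h) = (\<lambda>i. h i - w * U h i)"
      using linear_opD[OF lU, of 1 "V h" "- w" h] UV by (simp add: minus_scalar_def)
    ultimately have hg: "(\<lambda>i. h i - w * U h i) = g" by simp
    have "minus_scalar U z (B g) = (\<lambda>i. h i - w * U h i)"
      using linear_op_scale[OF lU, of "- w" h]
      by (simp add: minus_scalar_def B_def h_def[symmetric] algebra_simps wz)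
    then show "minus_scalar U z (B g) = g" by (simp add: hg)
  qed
  then show ?thesis unfolding B_def[abs_def] .
qed

lemma not_in_op_spectrum_inside_unit_disc:
  assumes U: "regular_op U" and V: "regular_op V"
    and UV: "\<And>f. U (V f) = f" and VU: "\<And>f. V (U f) = f"
    and z: "cmod z < 1"
  shows "z \<notin> op_spectrum U"
proof (cases "z = 0")
  case True
  have "resolvent_op U z V"
  proof (rule resolvent_opI)
    show "V f \<in> l2" "l2norm (V f) \<le> 1 * l2norm f" if "f \<in> l2" for f
      using l2_contractionD[OF regular_opD(2)[OF V] that] by auto
  qed (use True UV VU linear_opD[OF regular_opD(1)[OF V]] in \<open>auto simp: minus_scalar_def\<close>)
  then show ?thesis by (auto simp: not_in_op_spectrum_iff)
next
  case False
  have "cmod (1 / z) > 1" using z False by (simp add: norm_divide divide_less_eq)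
  then obtain B' where "resolvent_op V (1 / z) B'"
    using not_in_op_spectrum_outside_unit_disc[OF V] by (auto simp: not_in_op_spectrum_iff)
  then have "resolvent_op U z (\<lambda>g i. - (1 / z) * B' (V g) i)"
    using False by (intro resolvent_op_via_inverse[OF U V UV VU]) simp_all
  then show ?thesis by (auto simp: not_in_op_spectrum_iff)
qed

lemma bounded_below_perturb:
  assumes U: "l2_contraction U" and h: "h \<in> l2"
    and below: "\<And>f. f \<in> l2 \<Longrightarrow> c * l2norm f \<le> l2norm (minus_scalar U z f)"
    and w: "cmod (w - z) \<le> c / 2"
  shows "(c / 2) * l2norm h \<le> l2norm (minus_scalar U w h)"
proof -
  have "minus_scalar U z h = (\<lambda>i. 1 * minus_scalar U w h i + (w - z) * h i)"
    by (simp add: minus_scalar_def algebra_simps)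
  then have "c * l2norm h \<le> cmod 1 * l2norm (minus_scalar U w h) + cmod (w - z) * l2norm h"
    using below[OF h] l2_lincomb[OF minus_scalar_l2(1)[OF U h, of w] h, of 1 "w - z"] by simp
  moreover have "cmod (w - z) * l2norm h \<le> (c / 2) * l2norm h"
    by (rule mult_right_mono[OF w l2norm_nonneg])
  ultimately show ?thesis by simp
qed

lemma resolvent_l2norm_le:
  assumes B: "resolvent_op U w B" and d: "d > 0" and g: "g \<in> l2"
    and below: "\<And>h. h \<in> l2 \<Longrightarrow> d * l2norm h \<le> l2norm (minus_scalar U w h)"
  shows "l2norm (B g) \<le> l2norm g / d"
  using below[OF resolvent_opD(1)[OF B g]] resolvent_opD(5)[OF B g] d by (simp add: field_simps)

text \<open>The resolvent identity \<open>R(w) - R(w') = (w - w') R(w) R(w')\<close>, estimated pointwise.\<close>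

lemma resolvent_diff_le:
  assumes U: "linear_op U" and B: "resolvent_op U w B" and B': "resolvent_op U w' B'"
    and d: "d > 0" and g: "g \<in> l2"
    and below: "\<And>h. h \<in> l2 \<Longrightarrow> d * l2norm h \<le> l2norm (minus_scalar U w h)"
  shows "cmod (B g i - B' g i) \<le> cmod (w - w') * l2norm (B' g) / d"
proof -
  define h where "h = (\<lambda>i. 1 * B g i + (-1) * B' g i)"
  have B'g: "B' g \<in> l2" by (rule resolvent_opD(1)[OF B' g])
  have h_l2: "h \<in> l2" unfolding h_def using l2_lincomb[OF resolvent_opD(1)[OF B g] B'g] by blast
  have "minus_scalar U w (B' g) = (\<lambda>i. minus_scalar U w' (B' g) i - (w - w') * B' g i)"
    by (simp add: minus_scalar_def algebra_simps)
  then have "minus_scalar U w h = (\<lambda>i. (w - w') * B' g i)"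
    unfolding h_def minus_scalar_lincomb[OF U] using resolvent_opD(5)[OF B g] resolvent_opD(5)[OF B' g]
    by (simp add: algebra_simps)
  then have "d * l2norm h \<le> cmod (w - w') * l2norm (B' g)"
    using below[OF h_l2] l2_scale[OF B'g, of "w - w'"] by simp
  then have "d * cmod (h i) \<le> cmod (w - w') * l2norm (B' g)"
    using cmod_le_l2norm[OF h_l2, of i] d by (meson mult_left_mono less_imp_le order_trans)
  then show ?thesis using d by (simp add: h_def field_simps)
qed

text \<open>The resolvents at points \<open>w\<^sub>n \<rightarrow> z\<close> are uniformly bounded because \<open>U - z\<close> is bounded
  below, and by the resolvent identity they converge pointwise; their limit inverts \<open>U - z\<close>.\<close>

lemma not_in_op_spectrum_if_bounded_below_limit:
  fixes U :: "('i \<Rightarrow> complex) \<Rightarrow> ('i \<Rightarrow> complex)"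
  assumes U: "regular_op U" and c: "c > 0"
    and below: "\<And>f. f \<in> l2 \<Longrightarrow> c * l2norm f \<le> l2norm (minus_scalar U z f)"
    and w: "w \<longlonglongrightarrow> z" and w_close: "\<And>n. cmod (w n - z) \<le> c / 2"
    and w_resolvent: "\<And>n. w n \<notin> op_spectrum U"
  shows "z \<notin> op_spectrum U"
proof -
  have lU: "linear_op U" and cU: "l2_contraction U" using regular_opD[OF U] by auto
  obtain B where B: "\<And>n. resolvent_op U (w n) (B n)"
    using w_resolvent choice[of "\<lambda>n B. resolvent_op U (w n) B"] by (auto simp: not_in_op_spectrum_iff)
  note B_l2 = resolvent_opD(1)[OF B] and B_lin = resolvent_opD(2)[OF B]
  have below_w: "(c / 2) * l2norm h \<le> l2norm (minus_scalar U (w n) h)" if "h \<in> l2" for n h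
    by (rule bounded_below_perturb[OF cU that below w_close])
  have c2: "c / 2 > 0" using c by simp
  have B_bound: "l2norm (B n g) \<le> (2 / c) * l2norm g" if g: "g \<in> l2" for n g
    using resolvent_l2norm_le[OF B c2 g below_w] c by (simp add: field_simps)
  have B_diff: "cmod (B m g i - B n g i) \<le> (2 / c) * ((2 / c) * l2norm g) * cmod (w m - w n)"
    if g: "g \<in> l2" for m n g i
  proof -
    have "cmod (B m g i - B n g i) \<le> cmod (w m - w n) * l2norm (B n g) / (c / 2)"
      by (rule resolvent_diff_le[OF lU B[of m] B[of n] c2 g below_w[where n = m]])
    also have "\<dots> \<le> cmod (w m - w n) * ((2 / c) * l2norm g) / (c / 2)"
      using B_bound[OF g, of n] c by (intro divide_right_mono mult_left_mono) auto
    also have "\<dots> = (2 / c) * ((2 / c) * l2norm g) * cmod (w m - w n)" by (simp add: field_simps)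
    finally show ?thesis .
  qed
  have B_convergent: "convergent (\<lambda>n. B n g i)" if g: "g \<in> l2" for g i
  proof (rule Cauchy_convergent, rule CauchyI)
    fix e :: real assume e: "e > 0"
    define K where "K = (2 / c) * ((2 / c) * l2norm g) + 1"
    have K: "K > 0" using c l2norm_nonneg[of g] unfolding K_def by (simp add: add_nonneg_pos)
    obtain M where M: "\<And>m n. m \<ge> M \<Longrightarrow> n \<ge> M \<Longrightarrow> norm (w m - w n) < e / K"
      using CauchyD[OF LIMSEQ_imp_Cauchy[OF w], of "e / K"] e K by auto
    have "norm (B m g i - B n g i) < e" if "m \<ge> M" "n \<ge> M" for m n
    proof -
      have "norm (B m g i - B n g i) \<le> (K - 1) * cmod (w m - w n)"
        using B_diff[OF g] by (simp add: K_def)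
      also have "\<dots> \<le> K * cmod (w m - w n)" by (intro mult_right_mono) auto
      also have "\<dots> < e" using M[OF that] K by (simp add: field_simps)
      finally show ?thesis .
    qed
    then show "\<exists>M. \<forall>m\<ge>M. \<forall>n\<ge>M. norm (B m g i - B n g i) < e" by blast
  qed
  have vanishing: "(\<lambda>n. (w n - z) * B n g i) \<longlonglongrightarrow> 0" if g: "g \<in> l2" for g i
  proof (rule Lim_null_comparison)
    have "cmod (B n g i) \<le> (2 / c) * l2norm g" for n
      using cmod_le_l2norm[OF B_l2[OF g], of n i] B_bound[OF g, of n] by linarith
    then show "\<forall>\<^sub>F n in sequentially. norm ((w n - z) * B n g i) \<le> cmod (w n - z) * ((2 / c) * l2norm g)"
      unfolding norm_mult by (intro always_eventually allI mult_left_mono) auto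
    show "(\<lambda>n. cmod (w n - z) * ((2 / c) * l2norm g)) \<longlonglongrightarrow> 0"
      using tendsto_mult_right[OF tendsto_norm[OF LIM_zero[OF w]], of "(2 / c) * l2norm g"] by simp
  qed
  have shift_z: "minus_scalar U z h = (\<lambda>i. 1 * minus_scalar U (w n) h i + (w n - z) * h i)" for n h
    by (simp add: minus_scalar_def algebra_simps)
  show ?thesis
  proof (rule not_in_op_spectrum_of_approx_inverses[OF U, of "2 / c" B])
    show "0 \<le> 2 / c" using c by simp
    show "\<And>n g. g \<in> l2 \<Longrightarrow> B n g \<in> l2 \<and> l2norm (B n g) \<le> 2 / c * l2norm g"
      using B_l2 B_bound by blast
    show "\<And>n f g a b. f \<in> l2 \<Longrightarrow> g \<in> l2 \<Longrightarrow> B n (\<lambda>i. a * f i + b * g i) = (\<lambda>i. a * B n f i + b * B n g i)"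
      by (rule B_lin)
    show "\<And>g i. g \<in> l2 \<Longrightarrow> convergent (\<lambda>n. B n g i)" by (rule B_convergent)
    show "(\<lambda>n. minus_scalar U z (B n g) i) \<longlonglongrightarrow> g i" if g: "g \<in> l2" for g i
    proof -
      have "minus_scalar U z (B n g) i = g i + (w n - z) * B n g i" for n
        using shift_z[where n = n and h = "B n g"] resolvent_opD(5)[OF B g, of n] by simp
      then show ?thesis using tendsto_add[OF tendsto_const[of "g i"] vanishing[OF g, of i]] by simp
    qed
    show "(\<lambda>n. B n (minus_scalar U z f) i) \<longlonglongrightarrow> f i" if f: "f \<in> l2" for f i
    proof -
      have "B n (minus_scalar U z f) i = f i + (w n - z) * B n f i" for n
        using shift_z[where n = n and h = f] resolvent_opD(4)[OF B f, of n]
          B_lin[OF minus_scalar_l2(1)[OF cU f, of "w n"] f, of n 1 "w n - z"]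
        by simp
      then show ?thesis using tendsto_add[OF tendsto_const[of "f i"] vanishing[OF f, of i]] by simp
    qed
  qed
qed

lemma not_in_op_spectrum_if_bounded_below:
  assumes U: "regular_op U" and c: "c > 0"
    and below: "\<And>f. f \<in> l2 \<Longrightarrow> c * l2norm f \<le> l2norm (minus_scalar U z f)"
    and z: "cmod z \<ge> 1"
  shows "z \<notin> op_spectrum U"
proof -
  define u where "u = z / of_real (cmod z)"
  define d where "d n = c / (2 * (real n + 1))" for n
  define w where "w n = z + of_real (d n) * u" for n
  have z0: "z \<noteq> 0" using z by auto
  have u: "cmod u = 1" using z0 by (simp add: u_def norm_divide)
  have d: "d n > 0" "d n \<le> c / 2" for n using c by (simp_all add: d_def field_simps)
  have "d \<longlonglongrightarrow> 0"
    unfolding d_def by real_asymp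
  then have "w \<longlonglongrightarrow> z + of_real 0 * u"
    unfolding w_def by (intro tendsto_intros)
  moreover have "cmod (w n - z) \<le> c / 2" for n using d[of n] u by (simp add: w_def norm_mult)
  moreover have "w n \<notin> op_spectrum U" for n
  proof (rule not_in_op_spectrum_outside_unit_disc[OF U])
    have "w n = of_real (cmod z + d n) * u" using z0 by (simp add: w_def u_def algebra_simps)
    then show "cmod (w n) > 1" using u z d(1)[of n] by (simp add: norm_mult del: of_real_add)
  qed
  ultimately show ?thesis using not_in_op_spectrum_if_bounded_below_limit[OF U c below] by simp
qed

theorem op_spectrum_iff_finite_approx_eigenvalue:
  assumes U: "regular_op U" and V: "regular_op V"
    and UV: "\<And>f. U (V f) = f" and VU: "\<And>f. V (U f) = f"
  shows "z \<in> op_spectrum U \<longleftrightarrow> finite_approx_eigenvalue U z"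
proof
  assume "finite_approx_eigenvalue U z"
  then show "z \<in> op_spectrum U" by (rule in_op_spectrum_if_finite_approx_eigenvalue[OF regular_opD(2)[OF U]])
next
  assume spectrum: "z \<in> op_spectrum U"
  show "finite_approx_eigenvalue U z"
  proof (rule ccontr)
    assume "\<not> finite_approx_eigenvalue U z"
    then obtain \<epsilon> where \<epsilon>: "\<epsilon> > 0" and
      not_approx: "\<And>f. finite {i. f i \<noteq> 0} \<Longrightarrow> (\<exists>i. f i \<noteq> 0) \<Longrightarrow> \<epsilon> * l2norm f < l2norm (minus_scalar U z f)"
      unfolding finite_approx_eigenvalue_def by (auto simp: not_le)
    have "\<epsilon> * l2norm f \<le> l2norm (minus_scalar U z f)" if "finite {i. f i \<noteq> 0}" for f
    proof (cases "\<exists>i. f i \<noteq> 0")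
      case True then show ?thesis using not_approx[OF that] by simp
    next
      case False
      then have "f = (\<lambda>i. 0)" by auto
      then show ?thesis using linear_op_zero[OF regular_opD(1)[OF U]] by (simp add: minus_scalar_def l2_zero)
    qed
    then have below: "\<epsilon> * l2norm f \<le> l2norm (minus_scalar U z f)" if "f \<in> l2" for f
      using bounded_below_of_finite_support[OF regular_opD(1,2)[OF U]] \<epsilon> that by simp
    consider "cmod z > 1" | "cmod z < 1" | "cmod z = 1" by linarith
    then show False
      using spectrum not_in_op_spectrum_outside_unit_disc[OF U]
        not_in_op_spectrum_inside_unit_disc[OF U V UV VU]
        not_in_op_spectrum_if_bounded_below[OF U \<epsilon> below]
      by cases auto
  qed
qed

section \<open>Both walks are invertible regular operators\<close>

lemma UNIV_spin: "(UNIV :: spin set) = {Up, Down}"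
  using spin.exhaust by auto

lemma finite_UNIV_spin [simp]: "finite (UNIV :: spin set)"
  by (simp add: UNIV_spin)

lemma spin_neq_Up_iff [simp]: "s \<noteq> Up \<longleftrightarrow> s = Down"
  by (cases s) auto

lemma sum_times_UNIV_spin: "(\<Sum>i\<in>X \<times> UNIV. h i) = (\<Sum>x\<in>X. h (x, Up) + h (x, Down))"
proof -
  have "(\<Sum>i\<in>X \<times> UNIV. h i) = (\<Sum>x\<in>X. \<Sum>s\<in>UNIV. h (x, s))"
    by (simp add: sum.cartesian_product)
  then show ?thesis by (simp add: UNIV_spin)
qed

definition weighted_perm :: "('i \<Rightarrow> complex) \<Rightarrow> ('i \<Rightarrow> 'i) \<Rightarrow> ('i \<Rightarrow> complex) \<Rightarrow> ('i \<Rightarrow> complex)" where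
  "weighted_perm w \<pi> \<psi> = (\<lambda>i. w i * \<psi> (\<pi> i))"

lemma regular_op_weighted_perm:
  assumes "inj \<pi>" "\<And>i. cmod (w i) \<le> 1"
  shows "regular_op (weighted_perm w \<pi>)"
  unfolding regular_op_def
proof (intro conjI)
  show "linear_op (weighted_perm w \<pi>)" unfolding linear_op_def weighted_perm_def by (simp add: algebra_simps)
  show "pointwise_continuous (weighted_perm w \<pi>)"
    unfolding pointwise_continuous_def weighted_perm_def by (auto intro!: tendsto_intros)
  show "l2_contraction (weighted_perm w \<pi>)" unfolding l2_contraction_def
  proof (intro ballI)
    fix f :: "'a \<Rightarrow> complex" assume f: "f \<in> l2"
    show "weighted_perm w \<pi> f \<in> l2 \<and> l2norm (weighted_perm w \<pi> f) \<le> l2norm f"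
    proof (rule l2_l2norm_le_if_sums_bounded)
      fix F :: "'a set" assume F: "finite F"
      have "(\<Sum>i\<in>F. (cmod (weighted_perm w \<pi> f i))\<^sup>2) \<le> (\<Sum>i\<in>F. (cmod (f (\<pi> i)))\<^sup>2)"
        using assms(2) unfolding weighted_perm_def norm_mult
        by (intro sum_mono power_mono) (auto intro: mult_left_le_one_le)
      also have "\<dots> = (\<Sum>j\<in>\<pi> ` F. (cmod (f j))\<^sup>2)"
        using sum.reindex[of \<pi> F "\<lambda>j. (cmod (f j))\<^sup>2"] assms(1) by (simp add: inj_on_def inj_def)
      also have "\<dots> \<le> (l2norm f)\<^sup>2" by (rule sum_sq_le_l2norm_sq[OF f]) (use F in simp)
      finally show "(\<Sum>i\<in>F. (cmod (weighted_perm w \<pi> f i))\<^sup>2) \<le> (l2norm f)\<^sup>2" .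
    qed (rule l2norm_nonneg)
  qed
qed

definition coin_op :: "('x \<Rightarrow> complex) \<Rightarrow> ('x \<Rightarrow> complex) \<Rightarrow> ('x \<Rightarrow> complex) \<Rightarrow> ('x \<Rightarrow> complex)
    \<Rightarrow> ('x \<times> spin \<Rightarrow> complex) \<Rightarrow> ('x \<times> spin \<Rightarrow> complex)" where
  "coin_op a b c d \<psi> = (\<lambda>(x, s). if s = Up then a x * \<psi> (x, Up) + b x * \<psi> (x, Down)
                                   else c x * \<psi> (x, Up) + d x * \<psi> (x, Down))"

lemma coin_op_l2_bound:
  assumes bound: "\<And>x u v. (cmod (a x * u + b x * v))\<^sup>2 + (cmod (c x * u + d x * v))\<^sup>2 \<le> K\<^sup>2 * ((cmod u)\<^sup>2 + (cmod v)\<^sup>2)"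
    and K: "K \<ge> 0" and f: "f \<in> l2"
  shows "coin_op a b c d f \<in> l2 \<and> l2norm (coin_op a b c d f) \<le> K * l2norm f"
proof (rule l2_l2norm_le_if_sums_bounded)
  fix F :: "('a \<times> spin) set" assume F: "finite F"
  have X: "finite (fst ` F)" using F by simp
  have "(\<Sum>i\<in>F. (cmod (coin_op a b c d f i))\<^sup>2) \<le> (\<Sum>i\<in>fst ` F \<times> UNIV. (cmod (coin_op a b c d f i))\<^sup>2)"
    by (rule sum_mono2) (use X in \<open>auto simp: UNIV_spin\<close>, force)
  also have "\<dots> = (\<Sum>x\<in>fst ` F. (cmod (a x * f (x, Up) + b x * f (x, Down)))\<^sup>2
      + (cmod (c x * f (x, Up) + d x * f (x, Down)))\<^sup>2)"
    by (simp add: sum_times_UNIV_spin coin_op_def)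
  also have "\<dots> \<le> (\<Sum>x\<in>fst ` F. K\<^sup>2 * ((cmod (f (x, Up)))\<^sup>2 + (cmod (f (x, Down)))\<^sup>2))"
    by (rule sum_mono) (rule bound)
  also have "\<dots> = K\<^sup>2 * (\<Sum>i\<in>fst ` F \<times> UNIV. (cmod (f i))\<^sup>2)"
    by (simp add: sum_times_UNIV_spin sum_distrib_left)
  also have "\<dots> \<le> K\<^sup>2 * (l2norm f)\<^sup>2"
    by (rule mult_left_mono, rule sum_sq_le_l2norm_sq[OF f]) (use X in simp_all)
  finally show "(\<Sum>i\<in>F. (cmod (coin_op a b c d f i))\<^sup>2) \<le> (K * l2norm f)\<^sup>2"
    by (simp add: power_mult_distrib)
qed (use K l2norm_nonneg[of f] in simp)

lemma regular_op_coin_op: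
  assumes "\<And>x u v. (cmod (a x * u + b x * v))\<^sup>2 + (cmod (c x * u + d x * v))\<^sup>2 \<le> (cmod u)\<^sup>2 + (cmod v)\<^sup>2"
  shows "regular_op (coin_op a b c d)"
  unfolding regular_op_def
proof (intro conjI)
  show "linear_op (coin_op a b c d)" unfolding linear_op_def coin_op_def by (auto simp: algebra_simps)
  show "pointwise_continuous (coin_op a b c d)"
    unfolding pointwise_continuous_def coin_op_def by (auto intro!: tendsto_intros)
  show "l2_contraction (coin_op a b c d)"
    unfolding l2_contraction_def using coin_op_l2_bound[of a b c d 1] assms by simp
qed

lemma coin_op_comp:
  "coin_op a' b' c' d' (coin_op a b c d f) =
    coin_op (\<lambda>x. a' x * a x + b' x * c x) (\<lambda>x. a' x * b x + b' x * d x)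
      (\<lambda>x. c' x * a x + d' x * c x) (\<lambda>x. c' x * b x + d' x * d x) f"
  by (rule ext) (auto simp: coin_op_def algebra_simps split: prod.splits)

lemma coin_op_id:
  "(\<And>x. a x = 1) \<Longrightarrow> (\<And>x. b x = 0) \<Longrightarrow> (\<And>x. c x = 0) \<Longrightarrow> (\<And>x. d x = 1) \<Longrightarrow> coin_op a b c d f = f"
  by (rule ext) (auto simp: coin_op_def split: prod.splits)

lemma cmod_rotation_sq:
  fixes p q :: real and u v :: complex
  shows "(cmod (of_real p * u + - of_real q * v))\<^sup>2 + (cmod (of_real q * u + of_real p * v))\<^sup>2 =
    (p\<^sup>2 + q\<^sup>2) * ((cmod u)\<^sup>2 + (cmod v)\<^sup>2)"
  unfolding cmod_power2 by (simp add: power2_eq_square algebra_simps)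

lemma diagTT_weighted_perm:
  assumes "\<And>g. T g = (\<lambda>x. a x * g (p x))" "\<And>g. T' g = (\<lambda>x. b x * g (q x))"
  shows "diagTT T T' = weighted_perm (\<lambda>(x, s). if s = Up then a x else b x)
    (\<lambda>(x, s). if s = Up then (p x, Up) else (q x, Down))"
  by (rule ext, rule ext) (auto simp: diagTT_def weighted_perm_def assms split: prod.splits)

lemma regular_op_diagTT:
  assumes "\<And>g. T g = (\<lambda>x. a x * g (p x))" "\<And>g. T' g = (\<lambda>x. b x * g (q x))"
    and "inj p" "inj q" "\<And>x. cmod (a x) \<le> 1" "\<And>x. cmod (b x) \<le> 1"
  shows "regular_op (diagTT T T')"
  unfolding diagTT_weighted_perm[OF assms(1,2)]
proof (rule regular_op_weighted_perm)
  show "inj (\<lambda>(x, s). if s = Up then (p x, Up) else (q x, Down))"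
  proof (rule injI)
    fix u v :: "'a \<times> spin"
    assume eq: "(\<lambda>(x, s). if s = Up then (p x, Up) else (q x, Down)) u =
      (\<lambda>(x, s). if s = Up then (p x, Up) else (q x, Down)) v"
    obtain x s y t where "u = (x, s)" "v = (y, t)" by fastforce
    with eq show "u = v"
      by (cases s; cases t) (simp_all add: inj_eq[OF assms(3)] inj_eq[OF assms(4)])
  qed
  show "cmod ((\<lambda>(x, s). if s = Up then a x else b x) i) \<le> 1" for i
    using assms(5,6) by (auto split: prod.splits)
qed

lemma diagTT_inverse:
  assumes "\<And>g. A (T g) = g" "\<And>g. A' (T' g) = g"
  shows "diagTT A A' (diagTT T T' f) = f"
proof
  fix i :: "'a \<times> spin"
  obtain x s where i: "i = (x, s)" by fastforce
  have "(\<lambda>y. diagTT T T' f (y, Up)) = T (\<lambda>y. f (y, Up))"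
    and "(\<lambda>y. diagTT T T' f (y, Down)) = T' (\<lambda>y. f (y, Down))"
    by (simp_all add: diagTT_def)
  then show "diagTT A A' (diagTT T T' f) i = f i"
    unfolding i diagTT_def[of A A'] using assms by (cases s) simp_all
qed

lemma magnetic_translations_weighted:
  "T1 \<Phi> g = (\<lambda>x. cis (- (of_int (snd x) * \<Phi> / 2)) * g (fst x - 1, snd x))"
  "T1adj \<Phi> g = (\<lambda>x. cis (of_int (snd x) * \<Phi> / 2) * g (fst x + 1, snd x))"
  "T2 \<Phi> g = (\<lambda>x. cis (of_int (fst x) * \<Phi> / 2) * g (fst x, snd x - 1))"
  "T2adj \<Phi> g = (\<lambda>x. cis (- (of_int (fst x) * \<Phi> / 2)) * g (fst x, snd x + 1))"
  by (auto simp: T1_def T1adj_def T2_def T2adj_def)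

lemma inj_unit_shifts:
  "inj (\<lambda>x::int \<times> int. (fst x - 1, snd x))" "inj (\<lambda>x::int \<times> int. (fst x + 1, snd x))"
  "inj (\<lambda>x::int \<times> int. (fst x, snd x - 1))" "inj (\<lambda>x::int \<times> int. (fst x, snd x + 1))"
  by (auto simp: inj_def prod_eq_iff)

lemma regular_op_diagTT_magnetic:
  "regular_op (diagTT (T1 \<Phi>) (T1adj \<Phi>))" "regular_op (diagTT (T1adj \<Phi>) (T1 \<Phi>))"
  "regular_op (diagTT (T2 \<Phi>) (T2adj \<Phi>))" "regular_op (diagTT (T2adj \<Phi>) (T2 \<Phi>))"
  by (rule regular_op_diagTT[OF magnetic_translations_weighted(1,2) inj_unit_shifts(1,2)]
        regular_op_diagTT[OF magnetic_translations_weighted(2,1) inj_unit_shifts(2,1)]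
        regular_op_diagTT[OF magnetic_translations_weighted(3,4) inj_unit_shifts(3,4)]
        regular_op_diagTT[OF magnetic_translations_weighted(4,3) inj_unit_shifts(4,3)]; simp)+

lemma magnetic_translations_inverse:
  "T1adj \<Phi> (T1 \<Phi> g) = g" "T1 \<Phi> (T1adj \<Phi> g) = g" "T2adj \<Phi> (T2 \<Phi> g) = g" "T2 \<Phi> (T2adj \<Phi> g) = g"
  by (rule ext; auto simp: T1_def T1adj_def T2_def T2adj_def mult.assoc[symmetric] cis_mult)+

definition inv_sqrt2 :: complex where "inv_sqrt2 = 1 / of_real (sqrt 2)"

lemma inv_sqrt2_sq: "inv_sqrt2 * inv_sqrt2 = 1 / 2"
proof -
  have "of_real (sqrt 2) * of_real (sqrt 2) = (of_real (sqrt 2 * sqrt 2) :: complex)"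
    by (rule of_real_mult[symmetric])
  also have "sqrt 2 * sqrt 2 = 2" by simp
  finally show ?thesis by (simp add: inv_sqrt2_def)
qed

lemma coinH_eq_coin_op: "coinH = coin_op (\<lambda>_. inv_sqrt2) (\<lambda>_. inv_sqrt2) (\<lambda>_. inv_sqrt2) (\<lambda>_. - inv_sqrt2)"
proof (intro ext)
  fix \<psi> :: "'a \<times> spin \<Rightarrow> complex" and i :: "'a \<times> spin"
  have "(u + v) / of_real (sqrt 2) = inv_sqrt2 * u + inv_sqrt2 * v"
    and "(u - v) / of_real (sqrt 2) = inv_sqrt2 * u + - inv_sqrt2 * v" for u v :: complex
    by (simp_all add: inv_sqrt2_def add_divide_distrib diff_divide_distrib)
  then show "coinH \<psi> i = coin_op (\<lambda>_. inv_sqrt2) (\<lambda>_. inv_sqrt2) (\<lambda>_. inv_sqrt2) (\<lambda>_. - inv_sqrt2) \<psi> i"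
    by (cases i) (simp only: coinH_def coin_op_def prod.case)
qed

lemma coinH_coinH: "coinH (coinH f) = f"
  unfolding coinH_eq_coin_op coin_op_comp
  by (rule coin_op_id) (simp_all add: inv_sqrt2_sq)

lemma regular_op_coinH: "regular_op coinH"
  unfolding coinH_eq_coin_op
proof (rule regular_op_coin_op)
  fix u v :: complex
  have "(cmod (inv_sqrt2 * u + inv_sqrt2 * v))\<^sup>2 + (cmod (inv_sqrt2 * u + - inv_sqrt2 * v))\<^sup>2
      = 2 * (cmod inv_sqrt2)\<^sup>2 * ((cmod u)\<^sup>2 + (cmod v)\<^sup>2)"
    unfolding cmod_power2 by (simp add: power2_eq_square algebra_simps)
  also have "2 * (cmod inv_sqrt2)\<^sup>2 = 1" by (simp add: inv_sqrt2_def norm_divide power_divide)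
  finally show "(cmod (inv_sqrt2 * u + inv_sqrt2 * v))\<^sup>2 + (cmod (inv_sqrt2 * u + - inv_sqrt2 * v))\<^sup>2
      \<le> (cmod u)\<^sup>2 + (cmod v)\<^sup>2" by simp
qed

definition magW_inv :: "real \<Rightarrow> ((int \<times> int) \<times> spin \<Rightarrow> complex) \<Rightarrow> ((int \<times> int) \<times> spin \<Rightarrow> complex)" where
  "magW_inv \<Phi> = coinH \<circ> diagTT (T2adj \<Phi>) (T2 \<Phi>) \<circ> coinH \<circ> diagTT (T1adj \<Phi>) (T1 \<Phi>)"

lemma regular_op_magW: "regular_op (magW \<Phi>)" "regular_op (magW_inv \<Phi>)"
  unfolding magW_def magW_inv_def
  by (intro regular_op_comp regular_op_diagTT_magnetic regular_op_coinH)+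

lemma magW_inverse: "magW \<Phi> (magW_inv \<Phi> f) = f" "magW_inv \<Phi> (magW \<Phi> f) = f"
  unfolding magW_def magW_inv_def
  by (simp_all add: diagTT_inverse magnetic_translations_inverse coinH_coinH)

definition shiftS_inv :: "(int \<times> spin \<Rightarrow> complex) \<Rightarrow> (int \<times> spin \<Rightarrow> complex)" where
  "shiftS_inv \<psi> = (\<lambda>(y, s). \<psi> (y + spin_val s, s))"

lemma regular_op_shiftS: "regular_op shiftS" "regular_op shiftS_inv"
proof -
  have shiftS_eq: "shiftS = weighted_perm (\<lambda>_. 1) (\<lambda>(y, s). (y - spin_val s, s))"
    and shiftS_inv_eq: "shiftS_inv = weighted_perm (\<lambda>_. 1) (\<lambda>(y, s). (y + spin_val s, s))"
    by (intro ext; auto simp: shiftS_def shiftS_inv_def weighted_perm_def split: prod.splits)+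
  show "regular_op shiftS" unfolding shiftS_eq by (rule regular_op_weighted_perm) (auto simp: inj_def)
  show "regular_op shiftS_inv" unfolding shiftS_inv_eq by (rule regular_op_weighted_perm) (auto simp: inj_def)
qed

lemma shiftS_inverse: "shiftS (shiftS_inv f) = f" "shiftS_inv (shiftS f) = f"
  by (rule ext; auto simp: shiftS_def shiftS_inv_def split: prod.splits)+

definition rot_angle :: "real \<Rightarrow> real \<Rightarrow> int \<Rightarrow> real" where
  "rot_angle \<Phi> \<theta> x = \<Phi> * of_int x + \<theta>"

lemma coinRot_eq_coin_op:
  "coinRot \<Phi> \<theta> = coin_op (\<lambda>x. of_real (cos (rot_angle \<Phi> \<theta> x))) (\<lambda>x. - of_real (sin (rot_angle \<Phi> \<theta> x)))
     (\<lambda>x. of_real (sin (rot_angle \<Phi> \<theta> x))) (\<lambda>x. of_real (cos (rot_angle \<Phi> \<theta> x)))"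
  by (rule ext, rule ext) (auto simp: coinRot_def coin_op_def rot_angle_def Let_def split: prod.splits)

definition coinRot_inv :: "real \<Rightarrow> real \<Rightarrow> (int \<times> spin \<Rightarrow> complex) \<Rightarrow> (int \<times> spin \<Rightarrow> complex)" where
  "coinRot_inv \<Phi> \<theta> = coin_op (\<lambda>x. of_real (cos (rot_angle \<Phi> \<theta> x))) (\<lambda>x. of_real (sin (rot_angle \<Phi> \<theta> x)))
     (\<lambda>x. - of_real (sin (rot_angle \<Phi> \<theta> x))) (\<lambda>x. of_real (cos (rot_angle \<Phi> \<theta> x)))"

lemma regular_op_coinRot: "regular_op (coinRot \<Phi> \<theta>)" "regular_op (coinRot_inv \<Phi> \<theta>)"
proof -
  have rotation:
    "(cmod (of_real (cos a) * u + - of_real (sin a) * v))\<^sup>2 + (cmod (of_real (sin a) * u + of_real (cos a) * v))\<^sup>2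
       = (cmod u)\<^sup>2 + (cmod v)\<^sup>2"
    "(cmod (of_real (cos a) * u + of_real (sin a) * v))\<^sup>2 + (cmod (- of_real (sin a) * u + of_real (cos a) * v))\<^sup>2
       = (cmod u)\<^sup>2 + (cmod v)\<^sup>2" for a u v
    using cmod_rotation_sq[where p = "cos a" and q = "sin a" and u = u and v = v]
      cmod_rotation_sq[where p = "cos a" and q = "- sin a" and u = u and v = v] by simp_all
  show "regular_op (coinRot \<Phi> \<theta>)"
    unfolding coinRot_eq_coin_op by (rule regular_op_coin_op) (simp only: rotation order_refl)
  show "regular_op (coinRot_inv \<Phi> \<theta>)"
    unfolding coinRot_inv_def by (rule regular_op_coin_op) (simp only: rotation order_refl)
qed

lemma coinRot_inverse: "coinRot_inv \<Phi> \<theta> (coinRot \<Phi> \<theta> f) = f" "coinRot \<Phi> \<theta> (coinRot_inv \<Phi> \<theta> f) = f"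
proof -
  have "of_real (sin a) * of_real (sin a) + of_real (cos a) * of_real (cos a) = (1::complex)" for a
    by (metis of_real_add of_real_mult of_real_1 power2_eq_square sin_cos_squared_add)
  then have sin_cos: "of_real (sin a) * of_real (sin a) + of_real (cos a) * of_real (cos a) = (1::complex)"
    "of_real (cos a) * of_real (cos a) + of_real (sin a) * of_real (sin a) = (1::complex)" for a
    by (simp_all add: add.commute)
  show "coinRot_inv \<Phi> \<theta> (coinRot \<Phi> \<theta> f) = f" "coinRot \<Phi> \<theta> (coinRot_inv \<Phi> \<theta> f) = f"
    unfolding coinRot_eq_coin_op coinRot_inv_def coin_op_comp
    by (rule coin_op_id; simp add: sin_cos algebra_simps)+
qed

definition uamoW_inv :: "real \<Rightarrow> real \<Rightarrow> (int \<times> spin \<Rightarrow> complex) \<Rightarrow> (int \<times> spin \<Rightarrow> complex)" where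
  "uamoW_inv \<Phi> \<theta> = coinRot_inv \<Phi> \<theta> \<circ> shiftS_inv"

lemma regular_op_uamoW: "regular_op (uamoW \<Phi> \<theta>)" "regular_op (uamoW_inv \<Phi> \<theta>)"
  unfolding uamoW_def uamoW_inv_def
  by (rule regular_op_comp regular_op_shiftS regular_op_coinRot)+

lemma uamoW_inverse: "uamoW \<Phi> \<theta> (uamoW_inv \<Phi> \<theta> f) = f" "uamoW_inv \<Phi> \<theta> (uamoW \<Phi> \<theta> f) = f"
  unfolding uamoW_def uamoW_inv_def by (simp_all add: coinRot_inverse shiftS_inverse)

section \<open>Gauge transformation of the magnetic walk\<close>

text \<open>The parts of \<open>uamoW \<Phi> \<theta>\<close> proportional to \<open>e\<^sup>i\<^sup>\<theta>\<close> and to \<open>e\<^sup>-\<^sup>i\<^sup>\<theta>\<close>.\<close>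

definition uamo_pos :: "real \<Rightarrow> (int \<times> spin \<Rightarrow> complex) \<Rightarrow> (int \<times> spin \<Rightarrow> complex)" where
  "uamo_pos \<Phi> g = (\<lambda>(y, s). if s = Up then (1/2) * cis (of_int (y - 1) * \<Phi>) * (g (y - 1, Up) + \<i> * g (y - 1, Down))
      else (- \<i> / 2) * cis (of_int (y + 1) * \<Phi>) * (g (y + 1, Up) + \<i> * g (y + 1, Down)))"

definition uamo_neg :: "real \<Rightarrow> (int \<times> spin \<Rightarrow> complex) \<Rightarrow> (int \<times> spin \<Rightarrow> complex)" where
  "uamo_neg \<Phi> g = (\<lambda>(y, s). if s = Up then (1/2) * cis (- (of_int (y - 1) * \<Phi>)) * (g (y - 1, Up) - \<i> * g (y - 1, Down))
      else (\<i> / 2) * cis (- (of_int (y + 1) * \<Phi>)) * (g (y + 1, Up) - \<i> * g (y + 1, Down)))"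

definition row :: "((int \<times> int) \<times> spin \<Rightarrow> complex) \<Rightarrow> int \<Rightarrow> (int \<times> spin \<Rightarrow> complex)" where
  "row \<rho> x2 = (\<lambda>(x1, s). \<rho> ((x1, x2), s))"

definition gauged_magW :: "real \<Rightarrow> ((int \<times> int) \<times> spin \<Rightarrow> complex) \<Rightarrow> ((int \<times> int) \<times> spin \<Rightarrow> complex)" where
  "gauged_magW \<Phi> \<rho> =
     (\<lambda>((y1, y2), s). uamo_pos \<Phi> (row \<rho> (y2 - 1)) (y1, s) + uamo_neg \<Phi> (row \<rho> (y2 + 1)) (y1, s))"

text \<open>The phase \<open>e\<^sup>-\<^sup>i\<^sup>x\<^sup>1\<^sup>x\<^sup>2\<^sup>\<Phi>\<^sup>/\<^sup>2\<close> passes from the symmetric gauge of the magnetic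
  translations to a Landau gauge, in which the walk couples neighbouring rows through the two
  parts of \<open>uamoW\<close>; the factor \<open>i\<close> on spin \<open>Down\<close> turns the Hadamard coin into a rotation.\<close>

definition gauge_phase :: "real \<Rightarrow> (int \<times> int) \<times> spin \<Rightarrow> complex" where
  "gauge_phase \<Phi> = (\<lambda>((x1, x2), s). cis (- (of_int x1 * of_int x2 * \<Phi> / 2)) * (if s = Up then 1 else \<i>))"

lemma uamoW_eq_phase_parts: "uamoW \<Phi> \<theta> g = (\<lambda>i. cis \<theta> * uamo_pos \<Phi> g i + cis (- \<theta>) * uamo_neg \<Phi> g i)"
proof
  fix i :: "int \<times> spin"
  obtain y s where i: "i = (y, s)" by fastforce
  have cis_cos_sin: "cis a = of_real (cos a) + \<i> * of_real (sin a)" for a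
    by (simp add: complex_eq_iff)
  have phase: "cis \<theta> * cis (of_int x * \<Phi>) = cis (rot_angle \<Phi> \<theta> x)"
    "cis (- \<theta>) * cis (- (of_int x * \<Phi>)) = cis (- rot_angle \<Phi> \<theta> x)" for x
    by (simp_all add: cis_mult rot_angle_def algebra_simps)
  show "uamoW \<Phi> \<theta> g i = cis \<theta> * uamo_pos \<Phi> g i + cis (- \<theta>) * uamo_neg \<Phi> g i"
  proof (cases s)
    case Up
    have "cis \<theta> * uamo_pos \<Phi> g i + cis (- \<theta>) * uamo_neg \<Phi> g i
       = (cis (rot_angle \<Phi> \<theta> (y - 1)) * (g (y - 1, Up) + \<i> * g (y - 1, Down))
          + cis (- rot_angle \<Phi> \<theta> (y - 1)) * (g (y - 1, Up) - \<i> * g (y - 1, Down))) / 2"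
      unfolding i Up uamo_pos_def uamo_neg_def phase[symmetric] by (simp add: field_simps)
    also have "\<dots> = of_real (cos (rot_angle \<Phi> \<theta> (y - 1))) * g (y - 1, Up)
        - of_real (sin (rot_angle \<Phi> \<theta> (y - 1))) * g (y - 1, Down)"
      by (simp add: cis_cos_sin field_simps)
    also have "\<dots> = uamoW \<Phi> \<theta> g i"
      unfolding i Up by (simp add: uamoW_def shiftS_def coinRot_eq_coin_op coin_op_def spin_val_def)
    finally show ?thesis by simp
  next
    case Down
    have "cis \<theta> * uamo_pos \<Phi> g i + cis (- \<theta>) * uamo_neg \<Phi> g i
       = (- \<i> / 2) * cis (rot_angle \<Phi> \<theta> (y + 1)) * (g (y + 1, Up) + \<i> * g (y + 1, Down))
         + (\<i> / 2) * cis (- rot_angle \<Phi> \<theta> (y + 1)) * (g (y + 1, Up) - \<i> * g (y + 1, Down))"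
      unfolding i Down uamo_pos_def uamo_neg_def phase[symmetric] by (simp add: field_simps)
    also have "\<dots> = of_real (sin (rot_angle \<Phi> \<theta> (y + 1))) * g (y + 1, Up)
        + of_real (cos (rot_angle \<Phi> \<theta> (y + 1))) * g (y + 1, Down)"
      by (simp add: cis_cos_sin field_simps)
    also have "\<dots> = uamoW \<Phi> \<theta> g i"
      unfolding i Down by (simp add: uamoW_def shiftS_def coinRot_eq_coin_op coin_op_def spin_val_def)
    finally show ?thesis by simp
  qed
qed

lemma magW_Up:
  "magW \<Phi> \<psi> ((y1, y2), Up) = cis (- (of_int y2 * \<Phi> / 2)) * inv_sqrt2 *
     (cis (of_int (y1 - 1) * \<Phi> / 2) * inv_sqrt2 * (\<psi> ((y1 - 1, y2 - 1), Up) + \<psi> ((y1 - 1, y2 - 1), Down))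
    + cis (- (of_int (y1 - 1) * \<Phi> / 2)) * inv_sqrt2 * (\<psi> ((y1 - 1, y2 + 1), Up) - \<psi> ((y1 - 1, y2 + 1), Down)))"
  by (simp add: magW_def diagTT_def T1_def T2_def T1adj_def T2adj_def coinH_eq_coin_op coin_op_def algebra_simps)

lemma magW_Down:
  "magW \<Phi> \<psi> ((y1, y2), Down) = cis (of_int y2 * \<Phi> / 2) * inv_sqrt2 *
     (cis (of_int (y1 + 1) * \<Phi> / 2) * inv_sqrt2 * (\<psi> ((y1 + 1, y2 - 1), Up) + \<psi> ((y1 + 1, y2 - 1), Down))
    - cis (- (of_int (y1 + 1) * \<Phi> / 2)) * inv_sqrt2 * (\<psi> ((y1 + 1, y2 + 1), Up) - \<psi> ((y1 + 1, y2 + 1), Down)))"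
  by (simp add: magW_def diagTT_def T1_def T2_def T1adj_def T2adj_def coinH_eq_coin_op coin_op_def algebra_simps)

lemma gauge_identity_Up:
  fixes E F1 H1 F2 H2 K L1 L2 r a b c d :: complex
  assumes "E * F1 * H1 = K * L1" "E * F2 * H2 = K * L2" "r * r = 1 / 2"
  shows "E * r * (F1 * r * (H1 * 1 * a + H1 * \<i> * b) + F2 * r * (H2 * 1 * c - H2 * \<i> * d))
       = K * 1 * ((1/2) * L1 * (a + \<i> * b) + (1/2) * L2 * (c - \<i> * d))"
proof -
  have "E * r * (F1 * r * (H1 * 1 * a + H1 * \<i> * b) + F2 * r * (H2 * 1 * c - H2 * \<i> * d))
      = (r * r) * ((E * F1 * H1) * (a + \<i> * b) + (E * F2 * H2) * (c - \<i> * d))" by algebra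
  also have "\<dots> = K * 1 * ((1/2) * L1 * (a + \<i> * b) + (1/2) * L2 * (c - \<i> * d))"
    unfolding assms by algebra
  finally show ?thesis .
qed

lemma gauge_identity_Down:
  fixes E F1 H1 F2 H2 K L1 L2 r a b c d :: complex
  assumes "E * F1 * H1 = K * L1" "E * F2 * H2 = K * L2" "r * r = 1 / 2"
  shows "E * r * (F1 * r * (H1 * 1 * a + H1 * \<i> * b) - F2 * r * (H2 * 1 * c - H2 * \<i> * d))
       = K * \<i> * ((- \<i> / 2) * L1 * (a + \<i> * b) + (\<i> / 2) * L2 * (c - \<i> * d))"
proof -
  have "E * r * (F1 * r * (H1 * 1 * a + H1 * \<i> * b) - F2 * r * (H2 * 1 * c - H2 * \<i> * d))
      = (r * r) * ((E * F1 * H1) * (a + \<i> * b) - (E * F2 * H2) * (c - \<i> * d))" by algebra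
  also have "\<dots> = K * \<i> * ((- \<i> / 2) * L1 * (a + \<i> * b) + (\<i> / 2) * L2 * (c - \<i> * d))"
    unfolding assms by (simp add: field_simps)
  finally show ?thesis .
qed

lemma magW_gauge:
  "magW \<Phi> (\<lambda>i. gauge_phase \<Phi> i * \<rho> i) = (\<lambda>i. gauge_phase \<Phi> i * gauged_magW \<Phi> \<rho> i)"
proof
  fix i :: "(int \<times> int) \<times> spin"
  obtain y1 y2 s where i: "i = ((y1, y2), s)" by (metis prod.collapse)
  have cis3: "a + b + c = d + e \<Longrightarrow> cis a * cis b * cis c = cis d * cis e" for a b c d e
    by (simp add: cis_mult)
  show "magW \<Phi> (\<lambda>i. gauge_phase \<Phi> i * \<rho> i) i = gauge_phase \<Phi> i * gauged_magW \<Phi> \<rho> i"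
  proof (cases s)
    case Up
    show ?thesis unfolding i Up magW_Up
      apply (simp only: gauge_phase_def gauged_magW_def uamo_pos_def uamo_neg_def row_def prod.case
          if_True if_False spin.distinct simp_thms)
      by (rule gauge_identity_Up[OF _ _ inv_sqrt2_sq]; rule cis3, simp add: field_simps)
  next
    case Down
    show ?thesis unfolding i Down magW_Down
      apply (simp only: gauge_phase_def gauged_magW_def uamo_pos_def uamo_neg_def row_def prod.case
          if_True if_False spin.distinct simp_thms)
      by (rule gauge_identity_Down[OF _ _ inv_sqrt2_sq]; rule cis3, simp add: field_simps)
  qed
qed

lemma cmod_gauge_phase: "cmod (gauge_phase \<Phi> i) = 1"
  by (cases i) (auto simp: gauge_phase_def norm_mult)

lemma finite_approx_eigenvalue_conj_unimodular:
  assumes u: "\<And>i. cmod (u i) = 1" and AM: "\<And>\<rho>. A (\<lambda>i. u i * \<rho> i) = (\<lambda>i. u i * M \<rho> i)"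
  shows "finite_approx_eigenvalue A z \<longleftrightarrow> finite_approx_eigenvalue M z"
proof -
  have u0: "u i \<noteq> 0" for i using u[of i] by auto
  have conj: "minus_scalar A z (\<lambda>i. u i * \<rho> i) = (\<lambda>i. u i * minus_scalar M z \<rho> i)" for \<rho>
    unfolding minus_scalar_def AM by (simp add: algebra_simps)
  have norm: "l2norm (\<lambda>i. u i * \<rho> i) = l2norm \<rho>" for \<rho>
    by (rule l2norm_cong_cmod) (simp add: norm_mult u)
  have witness_iff: "(\<exists>f. finite {i. f i \<noteq> 0} \<and> (\<exists>i. f i \<noteq> 0) \<and> l2norm (minus_scalar A z f) \<le> \<epsilon> * l2norm f) \<longleftrightarrow>
      (\<exists>\<rho>. finite {i. \<rho> i \<noteq> 0} \<and> (\<exists>i. \<rho> i \<noteq> 0) \<and> l2norm (minus_scalar M z \<rho>) \<le> \<epsilon> * l2norm \<rho>)" for \<epsilon>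
  proof
    assume "\<exists>f. finite {i. f i \<noteq> 0} \<and> (\<exists>i. f i \<noteq> 0) \<and> l2norm (minus_scalar A z f) \<le> \<epsilon> * l2norm f"
    then obtain f where f: "finite {i. f i \<noteq> 0}" "\<exists>i. f i \<noteq> 0" "l2norm (minus_scalar A z f) \<le> \<epsilon> * l2norm f"
      by blast
    define \<rho> where "\<rho> i = f i / u i" for i
    have "f = (\<lambda>i. u i * \<rho> i)" using u0 by (simp add: \<rho>_def)
    then show "\<exists>\<rho>. finite {i. \<rho> i \<noteq> 0} \<and> (\<exists>i. \<rho> i \<noteq> 0) \<and> l2norm (minus_scalar M z \<rho>) \<le> \<epsilon> * l2norm \<rho>"
      using f u0 by (intro exI[of _ \<rho>]) (simp add: conj norm)
  next
    assume "\<exists>\<rho>. finite {i. \<rho> i \<noteq> 0} \<and> (\<exists>i. \<rho> i \<noteq> 0) \<and> l2norm (minus_scalar M z \<rho>) \<le> \<epsilon> * l2norm \<rho>"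
    then obtain \<rho> where "finite {i. \<rho> i \<noteq> 0}" "\<exists>i. \<rho> i \<noteq> 0" "l2norm (minus_scalar M z \<rho>) \<le> \<epsilon> * l2norm \<rho>"
      by blast
    then show "\<exists>f. finite {i. f i \<noteq> 0} \<and> (\<exists>i. f i \<noteq> 0) \<and> l2norm (minus_scalar A z f) \<le> \<epsilon> * l2norm f"
      using u0 by (intro exI[of _ "\<lambda>i. u i * \<rho> i"]) (simp add: conj norm)
  qed
  show ?thesis unfolding finite_approx_eigenvalue_def witness_iff ..
qed

lemma finite_approx_eigenvalue_magW_iff_gauged:
  "finite_approx_eigenvalue (magW \<Phi>) z \<longleftrightarrow> finite_approx_eigenvalue (gauged_magW \<Phi>) z"
  by (rule finite_approx_eigenvalue_conj_unimodular[where u = "gauge_phase \<Phi>"])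
    (simp_all add: cmod_gauge_phase magW_gauge)

section \<open>Dependence of \<open>uamoW\<close> on the phase \<open>\<theta>\<close>\<close>

definition translate :: "int \<Rightarrow> (int \<times> spin \<Rightarrow> complex) \<Rightarrow> (int \<times> spin \<Rightarrow> complex)" where
  "translate n g = (\<lambda>(x, s). g (x + n, s))"

lemma translate_l2:
  assumes "g \<in> l2" shows "translate n g \<in> l2" "l2norm (translate n g) = l2norm g"
proof -
  have contr: "l2_contraction (translate m)" for m
  proof -
    have "translate m = weighted_perm (\<lambda>_. 1) (\<lambda>(x, s). (x + m, s))"
      by (intro ext) (auto simp: translate_def weighted_perm_def split: prod.splits)
    moreover have "inj (\<lambda>(x :: int, s :: spin). (x + m, s))" by (auto simp: inj_def)
    ultimately show ?thesis by (simp add: regular_op_weighted_perm regular_opD(2))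
  qed
  show translated: "translate n g \<in> l2" using l2_contractionD(1)[OF contr assms] .
  have "translate (- n) (translate n g) = g" by (intro ext) (auto simp: translate_def split: prod.splits)
  then show "l2norm (translate n g) = l2norm g"
    using l2_contractionD(2)[OF contr assms, of n] l2_contractionD(2)[OF contr translated, of "- n"] by simp
qed

lemma translate_finite_support:
  assumes "finite {i. g i \<noteq> 0}" shows "finite {i. translate n g i \<noteq> 0}"
proof -
  have "{i. translate n g i \<noteq> 0} = (\<lambda>(x, s). (x - n, s)) ` {i. g i \<noteq> 0}"
    by (auto simp: translate_def image_iff split: prod.splits) (metis add_diff_cancel_right')
  then show ?thesis using assms by simp
qed

lemma translate_nonzero: "g (x, s) \<noteq> 0 \<Longrightarrow> translate n g (x - n, s) \<noteq> 0"
  by (simp add: translate_def)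

lemma uamoW_translate: "uamoW \<Phi> (\<theta> + of_int n * \<Phi>) (translate n g) = translate n (uamoW \<Phi> \<theta> g)"
  by (intro ext) (auto simp: uamoW_def shiftS_def coinRot_eq_coin_op coin_op_def spin_val_def translate_def
      rot_angle_def algebra_simps split: prod.splits)

lemma minus_scalar_uamoW_translate:
  "minus_scalar (uamoW \<Phi> (\<theta> + of_int n * \<Phi>)) z (translate n g) = translate n (minus_scalar (uamoW \<Phi> \<theta>) z g)"
  unfolding minus_scalar_def uamoW_translate by (intro ext) (auto simp: translate_def split: prod.splits)

lemma uamoW_phase_periodic: "uamoW \<Phi> (\<theta> + 2 * pi * of_int m) = uamoW \<Phi> \<theta>"
proof -
  have "rot_angle \<Phi> (\<theta> + 2 * pi * of_int m) x = rot_angle \<Phi> \<theta> x + 2 * pi * of_int m" for x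
    by (simp add: rot_angle_def)
  then show ?thesis unfolding uamoW_def coinRot_eq_coin_op by (simp add: cos_add sin_add)
qed

lemma cos_sin_dist_sq_le:
  fixes a b :: real
  shows "(cos a - cos b)\<^sup>2 + (sin a - sin b)\<^sup>2 \<le> (a - b)\<^sup>2"
proof -
  have "(cos a - cos b)\<^sup>2 + (sin a - sin b)\<^sup>2
      = ((sin a)\<^sup>2 + (cos a)\<^sup>2) + ((sin b)\<^sup>2 + (cos b)\<^sup>2) - 2 * (cos a * cos b + sin a * sin b)"
    by (simp add: power2_eq_square algebra_simps)
  also have "\<dots> = 2 - 2 * cos (a - b)" by (simp add: cos_diff)
  also have "\<dots> = 4 * (sin ((a - b) / 2))\<^sup>2"
  proof -
    have "2 * ((a - b) / 2) = a - b" by simp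
    then have "cos (a - b) = 1 - 2 * (sin ((a - b) / 2))\<^sup>2" by (metis cos_double_sin)
    then show ?thesis by simp
  qed
  also have "\<dots> \<le> 4 * ((a - b) / 2)\<^sup>2"
  proof -
    have "\<bar>sin ((a - b) / 2)\<bar> \<le> \<bar>(a - b) / 2\<bar>" by (rule abs_sin_x_le_abs_x)
    then have "(sin ((a - b) / 2))\<^sup>2 \<le> ((a - b) / 2)\<^sup>2" by (simp only: abs_le_square_iff)
    then show ?thesis by simp
  qed
  also have "\<dots> = (a - b)\<^sup>2" by (simp add: power2_eq_square field_simps)
  finally show ?thesis .
qed

lemma uamoW_phase_lipschitz:
  assumes g: "g \<in> l2"
  shows "l2norm (\<lambda>i. uamoW \<Phi> \<theta> g i - uamoW \<Phi> \<theta>' g i) \<le> \<bar>\<theta> - \<theta>'\<bar> * l2norm g"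
proof -
  define dc where "dc x = cos (rot_angle \<Phi> \<theta> x) - cos (rot_angle \<Phi> \<theta>' x)" for x
  define ds where "ds x = sin (rot_angle \<Phi> \<theta> x) - sin (rot_angle \<Phi> \<theta>' x)" for x
  define D where "D = coin_op (\<lambda>x. of_real (dc x)) (\<lambda>x. - of_real (ds x)) (\<lambda>x. of_real (ds x)) (\<lambda>x. of_real (dc x))"
  have coin_diff: "(\<lambda>i. coinRot \<Phi> \<theta> g i - coinRot \<Phi> \<theta>' g i) = D g"
    by (intro ext) (auto simp: coinRot_eq_coin_op coin_op_def D_def dc_def ds_def algebra_simps split: prod.splits)
  have "(dc x)\<^sup>2 + (ds x)\<^sup>2 \<le> \<bar>\<theta> - \<theta>'\<bar>\<^sup>2" for x
    using cos_sin_dist_sq_le[of "rot_angle \<Phi> \<theta> x" "rot_angle \<Phi> \<theta>' x"] by (simp add: dc_def ds_def rot_angle_def)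
  then have "(cmod (of_real (dc x) * u + - of_real (ds x) * v))\<^sup>2 + (cmod (of_real (ds x) * u + of_real (dc x) * v))\<^sup>2
      \<le> \<bar>\<theta> - \<theta>'\<bar>\<^sup>2 * ((cmod u)\<^sup>2 + (cmod v)\<^sup>2)" for x u v
    unfolding cmod_rotation_sq by (intro mult_right_mono) auto
  then have D: "D g \<in> l2 \<and> l2norm (D g) \<le> \<bar>\<theta> - \<theta>'\<bar> * l2norm g"
    unfolding D_def by (intro coin_op_l2_bound g) auto
  have "(\<lambda>i. uamoW \<Phi> \<theta> g i - uamoW \<Phi> \<theta>' g i) = shiftS (\<lambda>i. coinRot \<Phi> \<theta> g i - coinRot \<Phi> \<theta>' g i)"
    using linear_op_diff[OF regular_opD(1)[OF regular_op_shiftS(1)]] by (simp add: uamoW_def)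
  then have "(\<lambda>i. uamoW \<Phi> \<theta> g i - uamoW \<Phi> \<theta>' g i) = shiftS (D g)" unfolding coin_diff .
  then show ?thesis
    using l2_contractionD(2)[OF regular_opD(2)[OF regular_op_shiftS(1)]] D by (metis order.trans)
qed

text \<open>Translating by \<open>n\<close> moves the phase by \<open>n\<Phi>\<close>, and for irrational \<open>\<Phi>/2\<pi>\<close> these shifts are
  dense modulo \<open>2\<pi>\<close>; Lipschitz dependence on the phase then reaches every \<open>\<theta>\<close>.\<close>

lemma finite_approx_eigenvalue_uamoW_of_some_phases:
  assumes irrational: "\<Phi> / (2 * pi) \<notin> \<rat>"
    and some_phase: "\<And>\<epsilon>. \<epsilon> > 0 \<Longrightarrow> \<exists>k g. finite {i. g i \<noteq> 0} \<and> (\<exists>i. g i \<noteq> 0) \<and>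
      l2norm (minus_scalar (uamoW \<Phi> k) z g) \<le> \<epsilon> * l2norm g"
  shows "finite_approx_eigenvalue (uamoW \<Phi> \<theta>) z"
  unfolding finite_approx_eigenvalue_def
proof (intro allI impI)
  fix \<epsilon> :: real assume \<epsilon>: "\<epsilon> > 0"
  obtain k g where g: "finite {i. g i \<noteq> 0}" "\<exists>i. g i \<noteq> 0"
    "l2norm (minus_scalar (uamoW \<Phi> k) z g) \<le> (\<epsilon> / 2) * l2norm g"
    using some_phase[of "\<epsilon> / 2"] \<epsilon> by auto
  have \<delta>: "\<epsilon> / (8 * pi) > 0" using \<epsilon> by simp
  obtain h n where hn: "\<bar>of_int n * (\<Phi> / (2 * pi)) - of_int h - (\<theta> - k) / (2 * pi)\<bar> < \<epsilon> / (8 * pi)"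
    using sequence_of_fractional_parts_is_dense[OF irrational \<delta>] by metis
  define \<theta>' where "\<theta>' = k + of_int n * \<Phi> + 2 * pi * of_int (- h)"
  have "\<theta>' - \<theta> = 2 * pi * (of_int n * (\<Phi> / (2 * pi)) - of_int h - (\<theta> - k) / (2 * pi))"
    by (simp add: \<theta>'_def field_simps)
  then have "\<bar>\<theta> - \<theta>'\<bar> = 2 * pi * \<bar>of_int n * (\<Phi> / (2 * pi)) - of_int h - (\<theta> - k) / (2 * pi)\<bar>"
    by (subst abs_minus_commute) (simp add: abs_mult)
  also have "\<dots> \<le> \<epsilon> / 4" using hn by (simp add: field_simps)
  finally have close: "\<bar>\<theta> - \<theta>'\<bar> \<le> \<epsilon> / 4" .
  define g' where "g' = translate n g"
  have g_l2: "g \<in> l2" by (rule finite_support_l2[OF g(1)])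
  have g'_l2: "g' \<in> l2" and g'_norm: "l2norm g' = l2norm g" using translate_l2[OF g_l2] by (auto simp: g'_def)
  have "minus_scalar (uamoW \<Phi> \<theta>') z g' = translate n (minus_scalar (uamoW \<Phi> k) z g)"
    unfolding \<theta>'_def uamoW_phase_periodic g'_def by (rule minus_scalar_uamoW_translate)
  then have near: "l2norm (minus_scalar (uamoW \<Phi> \<theta>') z g') \<le> (\<epsilon> / 2) * l2norm g'"
    using g(3) translate_l2(2)[OF minus_scalar_l2(1)[OF regular_opD(2)[OF regular_op_uamoW(1)] g_l2]]
    by (simp add: g'_norm)
  have U_l2: "uamoW \<Phi> t g' \<in> l2" for t
    by (rule l2_contractionD(1)[OF regular_opD(2)[OF regular_op_uamoW(1)] g'_l2])
  have "minus_scalar (uamoW \<Phi> \<theta>) z g' =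
      (\<lambda>i. minus_scalar (uamoW \<Phi> \<theta>') z g' i + (uamoW \<Phi> \<theta> g' i - uamoW \<Phi> \<theta>' g' i))"
    by (simp add: minus_scalar_def)
  then have "l2norm (minus_scalar (uamoW \<Phi> \<theta>) z g') \<le>
      l2norm (minus_scalar (uamoW \<Phi> \<theta>') z g') + l2norm (\<lambda>i. uamoW \<Phi> \<theta> g' i - uamoW \<Phi> \<theta>' g' i)"
    using l2_add[OF minus_scalar_l2(1)[OF regular_opD(2)[OF regular_op_uamoW(1)] g'_l2]
        l2_diff[OF U_l2 U_l2, THEN conjunct1]] by simp
  also have "\<dots> \<le> (\<epsilon> / 2) * l2norm g' + (\<epsilon> / 4) * l2norm g'"
    using near uamoW_phase_lipschitz[OF g'_l2, of \<Phi> \<theta> \<theta>'] mult_right_mono[OF close l2norm_nonneg[of g']]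
    by linarith
  also have "\<dots> \<le> \<epsilon> * l2norm g'" using \<epsilon> l2norm_nonneg[of g'] by (simp add: field_simps)
  finally have "l2norm (minus_scalar (uamoW \<Phi> \<theta>) z g') \<le> \<epsilon> * l2norm g'" .
  moreover have "finite {i. g' i \<noteq> 0}" unfolding g'_def by (rule translate_finite_support[OF g(1)])
  moreover have "\<exists>i. g' i \<noteq> 0" using g(2) translate_nonzero unfolding g'_def by fast
  ultimately show "\<exists>f. finite {i. f i \<noteq> 0} \<and> (\<exists>i. f i \<noteq> 0) \<and> l2norm (minus_scalar (uamoW \<Phi> \<theta>) z f) \<le> \<epsilon> * l2norm f"
    by blast
qed

section \<open>From \<open>uamoW\<close> to the gauged magnetic walk: plane waves in the second coordinate\<close>

definition tensor :: "(int \<Rightarrow> complex) \<Rightarrow> (int \<times> spin \<Rightarrow> complex) \<Rightarrow> ((int \<times> int) \<times> spin \<Rightarrow> complex)" where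
  "tensor u g = (\<lambda>((x1, x2), s). u x2 * g (x1, s))"

lemma tensor_finite_support:
  assumes u: "finite {x. u x \<noteq> 0}" and g: "finite {i. g i \<noteq> 0}"
  shows "finite {i. tensor u g i \<noteq> 0}" "l2norm (tensor u g) = l2norm u * l2norm g"
proof -
  define Su where "Su = {x. u x \<noteq> 0}"
  define Sg where "Sg = {i. g i \<noteq> 0}"
  define m where "m = (\<lambda>(x2::int, (x1::int, s::spin)). ((x1, x2), s))"
  define T where "T = m ` (Su \<times> Sg)"
  have fin: "finite T" unfolding T_def Su_def Sg_def using u g by simp
  have inj: "inj_on m (Su \<times> Sg)" unfolding m_def inj_on_def by auto
  have zero: "tensor u g i = 0" if "i \<notin> T" for i
  proof -
    obtain x1 x2 s where i: "i = ((x1, x2), s)" by (metis prod.collapse)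
    have "(x2, (x1, s)) \<notin> Su \<times> Sg" using that unfolding T_def i m_def by force
    then show ?thesis by (auto simp: tensor_def i Su_def Sg_def)
  qed
  show "finite {i. tensor u g i \<noteq> 0}" using zero by (intro finite_subset[OF _ fin]) auto
  have "l2norm (tensor u g) = sqrt (\<Sum>i\<in>T. (cmod (tensor u g i))\<^sup>2)"
    by (rule l2_finite_support(2)[OF fin zero])
  also have "(\<Sum>i\<in>T. (cmod (tensor u g i))\<^sup>2) = (\<Sum>p\<in>Su \<times> Sg. (cmod (tensor u g (m p)))\<^sup>2)"
    unfolding T_def by (rule sum.reindex[OF inj, unfolded comp_def])
  also have "\<dots> = (\<Sum>p\<in>Su \<times> Sg. (cmod (u (fst p)))\<^sup>2 * (cmod (g (snd p)))\<^sup>2)"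
    by (rule sum.cong) (auto simp: m_def tensor_def norm_mult power_mult_distrib)
  also have "\<dots> = (\<Sum>x\<in>Su. (cmod (u x))\<^sup>2) * (\<Sum>j\<in>Sg. (cmod (g j))\<^sup>2)"
    by (simp add: sum_product sum.cartesian_product case_prod_beta)
  finally have "l2norm (tensor u g) = sqrt (\<Sum>x\<in>Su. (cmod (u x))\<^sup>2) * sqrt (\<Sum>j\<in>Sg. (cmod (g j))\<^sup>2)"
    by (simp add: real_sqrt_mult)
  moreover have "l2norm u = sqrt (\<Sum>x\<in>Su. (cmod (u x))\<^sup>2)"
    by (rule l2_finite_support(2)) (use u in \<open>auto simp: Su_def\<close>)
  moreover have "l2norm g = sqrt (\<Sum>j\<in>Sg. (cmod (g j))\<^sup>2)"
    by (rule l2_finite_support(2)) (use g in \<open>auto simp: Sg_def\<close>)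
  ultimately show "l2norm (tensor u g) = l2norm u * l2norm g" by simp
qed

lemma uamo_parts_scale:
  "uamo_pos \<Phi> (\<lambda>i. c * g i) = (\<lambda>i. c * uamo_pos \<Phi> g i)"
  "uamo_neg \<Phi> (\<lambda>i. c * g i) = (\<lambda>i. c * uamo_neg \<Phi> g i)"
  by (intro ext; auto simp: uamo_pos_def uamo_neg_def algebra_simps split: prod.splits)+

lemma gauged_magW_tensor:
  "gauged_magW \<Phi> (tensor u g) ((y1, y2), s) = u (y2 - 1) * uamo_pos \<Phi> g (y1, s) + u (y2 + 1) * uamo_neg \<Phi> g (y1, s)"
proof -
  have "row (tensor u g) x2 = (\<lambda>i. u x2 * g i)" for x2
    by (intro ext) (auto simp: row_def tensor_def split: prod.splits)
  then show ?thesis by (simp add: gauged_magW_def uamo_parts_scale)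
qed

lemma finite_support_uamo_parts:
  assumes "finite {i. g i \<noteq> 0}"
  shows "finite {i. uamo_pos \<Phi> g i \<noteq> 0}" "finite {i. uamo_neg \<Phi> g i \<noteq> 0}"
proof -
  define S where "S = (\<lambda>(x, d, s). (x + d, s)) ` (fst ` {i. g i \<noteq> 0} \<times> {-1, 1::int} \<times> (UNIV :: spin set))"
  have fin: "finite S" unfolding S_def using assms by simp
  have near: "(y, s) \<in> S" if "g (y - 1, s') \<noteq> 0 \<or> g (y + 1, s') \<noteq> 0" for y s s'
  proof -
    from that consider "g (y - 1, s') \<noteq> 0" | "g (y + 1, s') \<noteq> 0" by blast
    then show ?thesis
    proof cases
      case 1
      then have "(y - 1, 1::int, s) \<in> fst ` {i. g i \<noteq> 0} \<times> {-1, 1} \<times> UNIV" by force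
      then show ?thesis unfolding S_def by (force intro: image_eqI)
    next
      case 2
      then have "(y + 1, -1::int, s) \<in> fst ` {i. g i \<noteq> 0} \<times> {-1, 1} \<times> UNIV" by force
      then show ?thesis unfolding S_def by (force intro: image_eqI)
    qed
  qed
  have "{i. uamo_pos \<Phi> g i \<noteq> 0} \<subseteq> S" "{i. uamo_neg \<Phi> g i \<noteq> 0} \<subseteq> S"
  proof (safe)
    fix y s
    assume "uamo_pos \<Phi> g (y, s) \<noteq> 0"
    then have "g (y - 1, Up) \<noteq> 0 \<or> g (y - 1, Down) \<noteq> 0 \<or> g (y + 1, Up) \<noteq> 0 \<or> g (y + 1, Down) \<noteq> 0"
      by (cases s) (auto simp: uamo_pos_def)
    then show "(y, s) \<in> S" using near by blast
  next
    fix y s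
    assume "uamo_neg \<Phi> g (y, s) \<noteq> 0"
    then have "g (y - 1, Up) \<noteq> 0 \<or> g (y - 1, Down) \<noteq> 0 \<or> g (y + 1, Up) \<noteq> 0 \<or> g (y + 1, Down) \<noteq> 0"
      by (cases s) (auto simp: uamo_neg_def)
    then show "(y, s) \<in> S" using near by blast
  qed
  then show "finite {i. uamo_pos \<Phi> g i \<noteq> 0}" "finite {i. uamo_neg \<Phi> g i \<noteq> 0}"
    using fin by (auto intro: finite_subset)
qed

definition window :: "nat \<Rightarrow> int \<Rightarrow> complex" where
  "window L x = (if 0 \<le> x \<and> x < int L then 1 else 0)"

definition plane_wave :: "real \<Rightarrow> int \<Rightarrow> complex" where
  "plane_wave \<theta> x = cis (- (\<theta> * of_int x))"

lemma plane_wave_shift: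
  "plane_wave \<theta> (x - 1) = plane_wave \<theta> x * cis \<theta>" "plane_wave \<theta> (x + 1) = plane_wave \<theta> x * cis (- \<theta>)"
  by (simp_all add: plane_wave_def cis_mult algebra_simps)

text \<open>On a plane wave in the second coordinate the row coupling of \<open>gauged_magW\<close> reproduces
  \<open>uamoW\<close> at the same phase; cutting the wave off to a window of length \<open>L\<close> leaves an error
  at the two edges only.\<close>

lemma gauged_magW_windowed_wave:
  "minus_scalar (gauged_magW \<Phi>) z (tensor (\<lambda>x. plane_wave \<theta> x * window L x) \<phi>) =
   (\<lambda>i. tensor (\<lambda>x. plane_wave \<theta> x * window L x) (minus_scalar (uamoW \<Phi> \<theta>) z \<phi>) i
      + tensor (\<lambda>x. plane_wave \<theta> x * (window L (x - 1) - window L x)) (\<lambda>i. cis \<theta> * uamo_pos \<Phi> \<phi> i) i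
      + tensor (\<lambda>x. plane_wave \<theta> x * (window L (x + 1) - window L x)) (\<lambda>i. cis (- \<theta>) * uamo_neg \<Phi> \<phi> i) i)"
proof
  fix i :: "(int \<times> int) \<times> spin"
  obtain y1 y2 s where i: "i = ((y1, y2), s)" by (metis prod.collapse)
  show "minus_scalar (gauged_magW \<Phi>) z (tensor (\<lambda>x. plane_wave \<theta> x * window L x) \<phi>) i =
      tensor (\<lambda>x. plane_wave \<theta> x * window L x) (minus_scalar (uamoW \<Phi> \<theta>) z \<phi>) i
      + tensor (\<lambda>x. plane_wave \<theta> x * (window L (x - 1) - window L x)) (\<lambda>i. cis \<theta> * uamo_pos \<Phi> \<phi> i) i
      + tensor (\<lambda>x. plane_wave \<theta> x * (window L (x + 1) - window L x)) (\<lambda>i. cis (- \<theta>) * uamo_neg \<Phi> \<phi> i) i"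
    unfolding i minus_scalar_def gauged_magW_tensor uamoW_eq_phase_parts
    by (simp only: tensor_def prod.case plane_wave_shift) (simp add: algebra_simps)
qed

lemma windowed_wave_l2norm:
  "finite {x. plane_wave \<theta> x * window L x \<noteq> 0}" "l2norm (\<lambda>x. plane_wave \<theta> x * window L x) = sqrt (real L)"
proof -
  have zero: "plane_wave \<theta> x * window L x = 0" if "x \<notin> {0..<int L}" for x
    using that by (auto simp: window_def)
  have "{x. plane_wave \<theta> x * window L x \<noteq> 0} \<subseteq> {0..<int L}" using zero by blast
  then show "finite {x. plane_wave \<theta> x * window L x \<noteq> 0}" by (rule finite_subset) simp
  have "l2norm (\<lambda>x. plane_wave \<theta> x * window L x) = sqrt (\<Sum>x\<in>{0..<int L}. (cmod (plane_wave \<theta> x * window L x))\<^sup>2)"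
    by (rule l2_finite_support(2)) (simp, use zero in blast)
  also have "(\<Sum>x\<in>{0..<int L}. (cmod (plane_wave \<theta> x * window L x))\<^sup>2) = (\<Sum>x\<in>{0..<int L}. 1)"
    by (rule sum.cong) (simp_all add: window_def plane_wave_def norm_mult)
  finally show "l2norm (\<lambda>x. plane_wave \<theta> x * window L x) = sqrt (real L)" by simp
qed

lemma window_edge_l2norm:
  assumes "\<And>x. x \<notin> {a, b} \<Longrightarrow> window L (x + d) = window L x"
  shows "finite {x. plane_wave \<theta> x * (window L (x + d) - window L x) \<noteq> 0}"
    "l2norm (\<lambda>x. plane_wave \<theta> x * (window L (x + d) - window L x)) \<le> sqrt 2"
proof -
  have zero: "plane_wave \<theta> x * (window L (x + d) - window L x) = 0" if "x \<notin> {a, b}" for x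
    using assms[OF that] by simp
  have "{x. plane_wave \<theta> x * (window L (x + d) - window L x) \<noteq> 0} \<subseteq> {a, b}" using zero by blast
  then show "finite {x. plane_wave \<theta> x * (window L (x + d) - window L x) \<noteq> 0}"
    by (rule finite_subset) simp
  have "l2norm (\<lambda>x. plane_wave \<theta> x * (window L (x + d) - window L x))
      = sqrt (\<Sum>x\<in>{a, b}. (cmod (plane_wave \<theta> x * (window L (x + d) - window L x)))\<^sup>2)"
    by (rule l2_finite_support(2)) (simp, use zero in blast)
  also have "(\<Sum>x\<in>{a, b}. (cmod (plane_wave \<theta> x * (window L (x + d) - window L x)))\<^sup>2) \<le> (\<Sum>x\<in>{a, b}. 1)"
  proof (rule sum_mono)
    fix x
    have "cmod (plane_wave \<theta> x * (window L (x + d) - window L x)) \<le> 1"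
      by (simp add: norm_mult plane_wave_def window_def)
    then show "(cmod (plane_wave \<theta> x * (window L (x + d) - window L x)))\<^sup>2 \<le> 1"
      by (simp add: power_le_one)
  qed
  also have "(\<Sum>x\<in>{a, b}. (1::real)) \<le> 2" by (simp add: card_insert_if)
  finally show "l2norm (\<lambda>x. plane_wave \<theta> x * (window L (x + d) - window L x)) \<le> sqrt 2" by simp
qed

lemma gauged_magW_windowed_wave_estimate:
  fixes \<theta> :: real and L :: nat
  assumes \<phi>: "finite {i. \<phi> i \<noteq> 0}"
  defines "\<rho> \<equiv> tensor (\<lambda>x. plane_wave \<theta> x * window L x) \<phi>"
  shows "finite {i. \<rho> i \<noteq> 0}" "l2norm \<rho> = sqrt (real L) * l2norm \<phi>"
    and "l2norm (minus_scalar (gauged_magW \<Phi>) z \<rho>) \<le>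
      sqrt (real L) * l2norm (minus_scalar (uamoW \<Phi> \<theta>) z \<phi>) + sqrt 2 * (l2norm (uamo_pos \<Phi> \<phi>) + l2norm (uamo_neg \<Phi> \<phi>))"
proof -
  define u0 where "u0 = (\<lambda>x. plane_wave \<theta> x * window L x)"
  define u1 where "u1 = (\<lambda>x. plane_wave \<theta> x * (window L (x + - 1) - window L x))"
  define u2 where "u2 = (\<lambda>x. plane_wave \<theta> x * (window L (x + 1) - window L x))"
  define P where "P = (\<lambda>i. cis \<theta> * uamo_pos \<Phi> \<phi> i)"
  define Q where "Q = (\<lambda>i. cis (- \<theta>) * uamo_neg \<Phi> \<phi> i)"
  define E where "E = minus_scalar (uamoW \<Phi> \<theta>) z \<phi>"
  have u0: "finite {x. u0 x \<noteq> 0}" "l2norm u0 = sqrt (real L)" unfolding u0_def by (rule windowed_wave_l2norm)+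
  have u1: "finite {x. u1 x \<noteq> 0}" "l2norm u1 \<le> sqrt 2"
    unfolding u1_def by (rule window_edge_l2norm[where a = 0 and b = "int L"]; auto simp: window_def)+
  have u2: "finite {x. u2 x \<noteq> 0}" "l2norm u2 \<le> sqrt 2"
    unfolding u2_def by (rule window_edge_l2norm[where a = "-1" and b = "int L - 1"]; auto simp: window_def)+
  have P: "finite {i. P i \<noteq> 0}" "l2norm P = l2norm (uamo_pos \<Phi> \<phi>)"
    using finite_support_uamo_parts(1)[OF \<phi>, of \<Phi>] l2_scale[OF finite_support_l2, of "uamo_pos \<Phi> \<phi>" "cis \<theta>"]
    by (auto simp: P_def elim: rev_finite_subset)
  have Q: "finite {i. Q i \<noteq> 0}" "l2norm Q = l2norm (uamo_neg \<Phi> \<phi>)"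
    using finite_support_uamo_parts(2)[OF \<phi>, of \<Phi>] l2_scale[OF finite_support_l2, of "uamo_neg \<Phi> \<phi>" "cis (- \<theta>)"]
    by (auto simp: Q_def elim: rev_finite_subset)
  have E: "finite {i. E i \<noteq> 0}"
  proof (rule finite_subset[of _ "{i. P i \<noteq> 0} \<union> {i. Q i \<noteq> 0} \<union> {i. \<phi> i \<noteq> 0}"])
    show "{i. E i \<noteq> 0} \<subseteq> {i. P i \<noteq> 0} \<union> {i. Q i \<noteq> 0} \<union> {i. \<phi> i \<noteq> 0}"
      by (auto simp: E_def minus_scalar_def uamoW_eq_phase_parts P_def Q_def)
  qed (use P Q \<phi> in simp)
  note t0 = tensor_finite_support[OF u0(1) E] and t1 = tensor_finite_support[OF u1(1) P(1)]
    and t2 = tensor_finite_support[OF u2(1) Q(1)]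
  show "finite {i. \<rho> i \<noteq> 0}" "l2norm \<rho> = sqrt (real L) * l2norm \<phi>"
    using tensor_finite_support[OF u0(1) \<phi>] u0(2) by (simp_all add: \<rho>_def u0_def)
  have "minus_scalar (gauged_magW \<Phi>) z \<rho> = (\<lambda>i. tensor u0 E i + tensor u1 P i + tensor u2 Q i)"
    unfolding \<rho>_def u0_def u1_def u2_def E_def P_def Q_def gauged_magW_windowed_wave by simp
  then have "l2norm (minus_scalar (gauged_magW \<Phi>) z \<rho>) \<le> l2norm (tensor u0 E) + l2norm (tensor u1 P) + l2norm (tensor u2 Q)"
    using l2_add[OF l2_add[OF finite_support_l2[OF t0(1)] finite_support_l2[OF t1(1)], THEN conjunct1]
        finite_support_l2[OF t2(1)]]
      l2_add[OF finite_support_l2[OF t0(1)] finite_support_l2[OF t1(1)]]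
    by simp
  also have "\<dots> \<le> sqrt (real L) * l2norm E + sqrt 2 * l2norm P + sqrt 2 * l2norm Q"
    using t0(2) t1(2) t2(2) mult_right_mono[OF u1(2) l2norm_nonneg[of P]]
      mult_right_mono[OF u2(2) l2norm_nonneg[of Q]] u0(2) by simp
  finally show "l2norm (minus_scalar (gauged_magW \<Phi>) z \<rho>) \<le>
      sqrt (real L) * l2norm (minus_scalar (uamoW \<Phi> \<theta>) z \<phi>) + sqrt 2 * (l2norm (uamo_pos \<Phi> \<phi>) + l2norm (uamo_neg \<Phi> \<phi>))"
    by (simp add: E_def P(2) Q(2) algebra_simps)
qed

lemma finite_approx_eigenvalue_gauged_if_uamoW:
  assumes "finite_approx_eigenvalue (uamoW \<Phi> \<theta>) z"
  shows "finite_approx_eigenvalue (gauged_magW \<Phi>) z"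
  unfolding finite_approx_eigenvalue_def
proof (intro allI impI)
  fix \<epsilon> :: real assume \<epsilon>: "\<epsilon> > 0"
  obtain \<phi> i0 where \<phi>: "finite {i. \<phi> i \<noteq> 0}" "\<phi> i0 \<noteq> 0"
    "l2norm (minus_scalar (uamoW \<Phi> \<theta>) z \<phi>) \<le> (\<epsilon> / 2) * l2norm \<phi>"
    using assms \<epsilon> unfolding finite_approx_eigenvalue_def by (meson half_gt_zero)
  have \<phi>_pos: "l2norm \<phi> > 0" by (rule l2norm_pos[OF finite_support_l2[OF \<phi>(1)] \<phi>(2)])
  define K where "K = sqrt 2 * (l2norm (uamo_pos \<Phi> \<phi>) + l2norm (uamo_neg \<Phi> \<phi>))"
  define c where "c = (\<epsilon> / 2) * l2norm \<phi>"
  have c: "c > 0" using \<epsilon> \<phi>_pos by (simp add: c_def)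
  define L where "L = nat \<lceil>(K / c)\<^sup>2\<rceil> + 1"
  have "K / c \<le> sqrt (real L)"
    using real_sqrt_le_mono[of "(K / c)\<^sup>2" "real L"] c by (simp add: L_def K_def l2norm_nonneg) linarith
  then have K_le: "K \<le> sqrt (real L) * c" using c by (simp add: divide_le_eq)
  define \<rho> where "\<rho> = tensor (\<lambda>x. plane_wave \<theta> x * window L x) \<phi>"
  have \<rho>: "finite {i. \<rho> i \<noteq> 0}" "l2norm \<rho> = sqrt (real L) * l2norm \<phi>"
    "l2norm (minus_scalar (gauged_magW \<Phi>) z \<rho>) \<le> sqrt (real L) * l2norm (minus_scalar (uamoW \<Phi> \<theta>) z \<phi>)
      + sqrt 2 * (l2norm (uamo_pos \<Phi> \<phi>) + l2norm (uamo_neg \<Phi> \<phi>))"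
    unfolding \<rho>_def by (rule gauged_magW_windowed_wave_estimate[OF \<phi>(1)])+
  have "l2norm (minus_scalar (gauged_magW \<Phi>) z \<rho>) \<le> sqrt (real L) * c + K"
    using \<rho>(3) mult_left_mono[OF \<phi>(3), of "sqrt (real L)"] by (simp add: K_def c_def)
  also have "\<dots> \<le> \<epsilon> * l2norm \<rho>" using K_le \<rho>(2) by (simp add: c_def algebra_simps)
  finally have "l2norm (minus_scalar (gauged_magW \<Phi>) z \<rho>) \<le> \<epsilon> * l2norm \<rho>" .
  moreover have "\<rho> ((fst i0, 0), snd i0) \<noteq> 0"
  proof -
    have "int L > 0" unfolding L_def by linarith
    then show ?thesis using \<phi>(2) by (simp add: \<rho>_def tensor_def plane_wave_def window_def)
  qed
  ultimately show "\<exists>f. finite {i. f i \<noteq> 0} \<and> (\<exists>i. f i \<noteq> 0) \<and> l2norm (minus_scalar (gauged_magW \<Phi>) z f) \<le> \<epsilon> * l2norm f"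
    using \<rho>(1) by blast
qed

section \<open>From the gauged magnetic walk to \<open>uamoW\<close>: Fourier transform in the second coordinate\<close>

lemma has_integral_cos_int_multiple:
  fixes j :: int
  shows "((\<lambda>k. cos (k * of_int j)) has_integral (if j = 0 then 2 * pi else 0)) {0..2 * pi}"
proof (cases "j = 0")
  case True
  then show ?thesis using has_integral_const_real[of "1::real" 0 "2 * pi"] by simp
next
  case False
  have "((\<lambda>k. sin (k * of_int j) / of_int j) has_real_derivative cos (k * of_int j)) (at k)" for k
    using False by (auto intro!: derivative_eq_intros)
  then have "((\<lambda>k. cos (k * of_int j)) has_integral
      (sin (2 * pi * of_int j) / of_int j - sin (0 * of_int j) / of_int j)) {0..2 * pi}"
    by (intro fundamental_theorem_of_calculus)
      (auto simp: has_real_derivative_iff_has_vector_derivative intro: has_vector_derivative_at_within)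
  then show ?thesis using False by simp
qed

lemma has_integral_sin_int_multiple:
  fixes j :: int
  shows "((\<lambda>k. sin (k * of_int j)) has_integral 0) {0..2 * pi}"
proof (cases "j = 0")
  case True
  then show ?thesis using has_integral_const_real[of "0::real" 0 "2 * pi"] by simp
next
  case False
  have "((\<lambda>k. - cos (k * of_int j) / of_int j) has_real_derivative sin (k * of_int j)) (at k)" for k
    using False by (auto intro!: derivative_eq_intros)
  then have "((\<lambda>k. sin (k * of_int j)) has_integral
      (- cos (2 * pi * of_int j) / of_int j - - cos (0 * of_int j) / of_int j)) {0..2 * pi}"
    by (intro fundamental_theorem_of_calculus)
      (auto simp: has_real_derivative_iff_has_vector_derivative intro: has_vector_derivative_at_within)
  then show ?thesis using False by simp
qed

lemma cmod_sq_trig_sum: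
  fixes a :: "int \<Rightarrow> complex" and k :: real
  shows "(cmod (\<Sum>n\<in>Y. a n * cis (k * of_int n)))\<^sup>2 =
    (\<Sum>n\<in>Y. \<Sum>m\<in>Y. Re (a n * cnj (a m)) * cos (k * of_int (n - m)) - Im (a n * cnj (a m)) * sin (k * of_int (n - m)))"
proof -
  have "complex_of_real ((cmod (\<Sum>n\<in>Y. a n * cis (k * of_int n)))\<^sup>2)
      = (\<Sum>n\<in>Y. a n * cis (k * of_int n)) * cnj (\<Sum>n\<in>Y. a n * cis (k * of_int n))"
    by (rule complex_norm_square)
  also have "\<dots> = (\<Sum>n\<in>Y. \<Sum>m\<in>Y. (a n * cnj (a m)) * cis (k * of_int (n - m)))"
    by (simp add: sum_product cis_cnj cis_mult algebra_simps)
  finally have "(cmod (\<Sum>n\<in>Y. a n * cis (k * of_int n)))\<^sup>2 =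
      Re (\<Sum>n\<in>Y. \<Sum>m\<in>Y. (a n * cnj (a m)) * cis (k * of_int (n - m)))"
    by (metis Re_complex_of_real)
  then show ?thesis by (simp add: Re_sum cis.sel)
qed

lemma parseval_trig_sum:
  fixes a :: "int \<Rightarrow> complex"
  assumes Y: "finite Y"
  shows "((\<lambda>k. (cmod (\<Sum>n\<in>Y. a n * cis (k * of_int n)))\<^sup>2) has_integral (2 * pi * (\<Sum>n\<in>Y. (cmod (a n))\<^sup>2))) {0..2 * pi}"
proof -
  define c where "c n m = a n * cnj (a m)" for n m
  have "((\<lambda>k. \<Sum>n\<in>Y. \<Sum>m\<in>Y. Re (c n m) * cos (k * of_int (n - m)) - Im (c n m) * sin (k * of_int (n - m)))
      has_integral (\<Sum>n\<in>Y. \<Sum>m\<in>Y. Re (c n m) * (if n - m = 0 then 2 * pi else 0) - Im (c n m) * 0)) {0..2 * pi}"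
    by (intro has_integral_sum Y has_integral_diff has_integral_mult_right
        has_integral_cos_int_multiple has_integral_sin_int_multiple)
  moreover have "(\<Sum>n\<in>Y. \<Sum>m\<in>Y. Re (c n m) * (if n - m = 0 then 2 * pi else 0) - Im (c n m) * 0)
      = 2 * pi * (\<Sum>n\<in>Y. (cmod (a n))\<^sup>2)"
  proof -
    have "(\<Sum>n\<in>Y. \<Sum>m\<in>Y. Re (c n m) * (if n - m = 0 then 2 * pi else 0) - Im (c n m) * 0)
        = (\<Sum>n\<in>Y. Re (c n n) * (2 * pi))"
      using Y by (simp add: if_distrib[of "\<lambda>t. _ * t"] sum.delta cong: if_cong)
    also have "\<dots> = (\<Sum>n\<in>Y. 2 * pi * (cmod (a n))\<^sup>2)"
      by (intro sum.cong refl) (simp add: c_def complex_mult_cnj cmod_power2)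
    finally show ?thesis by (simp add: sum_distrib_left)
  qed
  ultimately show ?thesis unfolding cmod_sq_trig_sum by (simp add: c_def)
qed

definition partial_fourier :: "real \<Rightarrow> int \<Rightarrow> ((int \<times> int) \<times> spin \<Rightarrow> complex) \<Rightarrow> (int \<times> spin \<Rightarrow> complex)" where
  "partial_fourier k N \<rho> = (\<lambda>j. \<Sum>x2\<in>{-N..N}. \<rho> ((fst j, x2), snd j) * cis (k * of_int x2))"

definition in_box :: "int \<Rightarrow> (int \<times> int) \<times> spin \<Rightarrow> bool" where
  "in_box R i \<longleftrightarrow> \<bar>fst (fst i)\<bar> \<le> R \<and> \<bar>snd (fst i)\<bar> \<le> R"

lemma finite_support_in_box:
  assumes "finite {i. \<rho> i \<noteq> 0}"
  obtains R where "R \<ge> 0" "\<And>i. \<not> in_box R i \<Longrightarrow> \<rho> i = 0"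
proof -
  define R where "R = Max (insert 0 ((\<lambda>i. max \<bar>fst (fst i)\<bar> \<bar>snd (fst i)\<bar>) ` {i. \<rho> i \<noteq> 0}))"
  have fin: "finite (insert 0 ((\<lambda>i. max \<bar>fst (fst i)\<bar> \<bar>snd (fst i)\<bar>) ` {i. \<rho> i \<noteq> 0}))"
    using assms by simp
  have "R \<ge> 0" unfolding R_def by (rule Max_ge[OF fin]) simp
  moreover have "in_box R i" if "\<rho> i \<noteq> 0" for i
    using Max_ge[OF fin, of "max \<bar>fst (fst i)\<bar> \<bar>snd (fst i)\<bar>"] that by (simp add: R_def in_box_def)
  ultimately show ?thesis using that by blast
qed

lemma gauged_magW_outside_box:
  assumes "\<And>i. \<not> in_box R i \<Longrightarrow> \<rho> i = 0" and "\<not> in_box (R + 1) i"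
  shows "gauged_magW \<Phi> \<rho> i = 0"
proof -
  obtain y1 y2 s where i: "i = ((y1, y2), s)" by (metis prod.collapse)
  have far: "\<bar>y1\<bar> > R + 1 \<or> \<bar>y2\<bar> > R + 1" using assms(2) by (auto simp: i in_box_def)
  have "\<rho> ((a, b), t) = 0" if "a \<in> {y1 - 1, y1 + 1}" "b \<in> {y2 - 1, y2 + 1}" for a b t
  proof -
    have "\<not> (\<bar>a\<bar> \<le> R \<and> \<bar>b\<bar> \<le> R)" using that far by auto
    then show ?thesis using assms(1)[of "((a, b), t)"] by (simp add: in_box_def)
  qed
  then show ?thesis unfolding i
    by (cases s) (simp_all add: gauged_magW_def uamo_pos_def uamo_neg_def row_def)
qed

lemma sum_shift_fourier:
  fixes h :: "int \<Rightarrow> complex"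
  assumes "\<And>x. \<bar>x\<bar> \<ge> N \<Longrightarrow> h x = 0" and "d \<in> {-1, 1}"
  shows "(\<Sum>x\<in>{-N..N}. h (x + d) * cis (k * of_int x)) = cis (- (k * of_int d)) * (\<Sum>x\<in>{-N..N}. h x * cis (k * of_int x))"
proof -
  have "(\<Sum>x\<in>{-N..N}. h (x + d) * cis (k * of_int x)) = (\<Sum>y\<in>{-N+d..N+d}. h y * cis (k * of_int (y - d)))"
    by (rule sum.reindex_bij_witness[of _ "\<lambda>y. y - d" "\<lambda>x. x + d"]) auto
  also have "\<dots> = cis (- (k * of_int d)) * (\<Sum>y\<in>{-N+d..N+d}. h y * cis (k * of_int y))"
    by (simp add: sum_distrib_left cis_mult algebra_simps)
  also have "(\<Sum>y\<in>{-N+d..N+d}. h y * cis (k * of_int y)) = (\<Sum>y\<in>{-N+1..N-1}. h y * cis (k * of_int y))"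
    using assms by (intro sum.mono_neutral_right) auto
  also have "\<dots> = (\<Sum>y\<in>{-N..N}. h y * cis (k * of_int y))"
    using assms by (intro sum.mono_neutral_left) auto
  finally show ?thesis .
qed

lemma sum_scaled_lincomb:
  fixes c u v :: "'a \<Rightarrow> complex"
  shows "(\<Sum>n\<in>Y. c n * (\<alpha> * (u n + \<beta> * v n))) = \<alpha> * ((\<Sum>n\<in>Y. c n * u n) + \<beta> * (\<Sum>n\<in>Y. c n * v n))"
    and "(\<Sum>n\<in>Y. c n * (\<alpha> * (u n - \<beta> * v n))) = \<alpha> * ((\<Sum>n\<in>Y. c n * u n) - \<beta> * (\<Sum>n\<in>Y. c n * v n))"
  by (induction Y rule: infinite_finite_induct; simp add: algebra_simps)+

lemma uamo_parts_sum:
  "uamo_pos \<Phi> (\<lambda>i. \<Sum>n\<in>Y. c n * h n i) = (\<lambda>i. \<Sum>n\<in>Y. c n * uamo_pos \<Phi> (h n) i)"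
  "uamo_neg \<Phi> (\<lambda>i. \<Sum>n\<in>Y. c n * h n i) = (\<lambda>i. \<Sum>n\<in>Y. c n * uamo_neg \<Phi> (h n) i)"
proof -
  have "uamo_pos \<Phi> (\<lambda>i. \<Sum>n\<in>Y. c n * h n i) i = (\<Sum>n\<in>Y. c n * uamo_pos \<Phi> (h n) i)"
    "uamo_neg \<Phi> (\<lambda>i. \<Sum>n\<in>Y. c n * h n i) i = (\<Sum>n\<in>Y. c n * uamo_neg \<Phi> (h n) i)" for i
    by (cases i, cases "snd i"; simp only: uamo_pos_def uamo_neg_def prod.case snd_conv if_True if_False
        spin.distinct simp_thms sum_scaled_lincomb)+
  then show "uamo_pos \<Phi> (\<lambda>i. \<Sum>n\<in>Y. c n * h n i) = (\<lambda>i. \<Sum>n\<in>Y. c n * uamo_pos \<Phi> (h n) i)"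
    "uamo_neg \<Phi> (\<lambda>i. \<Sum>n\<in>Y. c n * h n i) = (\<lambda>i. \<Sum>n\<in>Y. c n * uamo_neg \<Phi> (h n) i)"
    by auto
qed

text \<open>Fourier transformation along the second coordinate turns the row shifts \<open>x\<^sub>2 \<mapsto> x\<^sub>2 \<plusminus> 1\<close>
  of \<open>gauged_magW\<close> into the phases \<open>e\<^sup>\<plusminus>\<^sup>i\<^sup>k\<close>, i.e. into \<open>uamoW\<close> at phase \<open>k\<close>.\<close>

lemma partial_fourier_gauged_magW:
  assumes zero: "\<And>i. \<bar>snd (fst i)\<bar> \<ge> N \<Longrightarrow> \<rho> i = 0"
  shows "partial_fourier k N (gauged_magW \<Phi> \<rho>) = uamoW \<Phi> k (partial_fourier k N \<rho>)"
proof -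
  have rows: "(\<lambda>i. \<Sum>x2\<in>{-N..N}. cis (k * of_int x2) * row \<rho> (x2 + d) i) =
      (\<lambda>i. cis (- (k * of_int d)) * partial_fourier k N \<rho> i)" if "d \<in> {-1, 1}" for d
  proof
    fix i :: "int \<times> spin"
    have "(\<Sum>x2\<in>{-N..N}. cis (k * of_int x2) * row \<rho> (x2 + d) i) =
        (\<Sum>x2\<in>{-N..N}. \<rho> ((fst i, x2 + d), snd i) * cis (k * of_int x2))"
      by (rule sum.cong) (auto simp: row_def split: prod.splits)
    also have "\<dots> = cis (- (k * of_int d)) * partial_fourier k N \<rho> i"
      unfolding partial_fourier_def
      by (rule sum_shift_fourier[where h = "\<lambda>x. \<rho> ((fst i, x), snd i)"]) (use zero that in auto)
    finally show "(\<Sum>x2\<in>{-N..N}. cis (k * of_int x2) * row \<rho> (x2 + d) i) =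
        cis (- (k * of_int d)) * partial_fourier k N \<rho> i" .
  qed
  have rows_minus: "(\<lambda>i. \<Sum>x2\<in>{-N..N}. cis (k * of_int x2) * row \<rho> (x2 - 1) i) =
      (\<lambda>i. cis k * partial_fourier k N \<rho> i)"
    using rows[of "-1"] by simp
  have rows_plus: "(\<lambda>i. \<Sum>x2\<in>{-N..N}. cis (k * of_int x2) * row \<rho> (x2 + 1) i) =
      (\<lambda>i. cis (- k) * partial_fourier k N \<rho> i)"
    using rows[of 1] by simp
  have "partial_fourier k N (gauged_magW \<Phi> \<rho>) =
      (\<lambda>j. uamo_pos \<Phi> (\<lambda>i. \<Sum>x2\<in>{-N..N}. cis (k * of_int x2) * row \<rho> (x2 - 1) i) j
        + uamo_neg \<Phi> (\<lambda>i. \<Sum>x2\<in>{-N..N}. cis (k * of_int x2) * row \<rho> (x2 + 1) i) j)"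
    unfolding uamo_parts_sum
    by (intro ext) (auto simp: partial_fourier_def gauged_magW_def sum.distrib algebra_simps split: prod.splits)
  also have "\<dots> = uamoW \<Phi> k (partial_fourier k N \<rho>)"
    unfolding rows_minus rows_plus uamo_parts_scale uamoW_eq_phase_parts ..
  finally show ?thesis .
qed

lemma partial_fourier_minus_scalar:
  assumes "\<And>i. \<bar>snd (fst i)\<bar> \<ge> N \<Longrightarrow> \<rho> i = 0"
  shows "partial_fourier k N (minus_scalar (gauged_magW \<Phi>) z \<rho>) = minus_scalar (uamoW \<Phi> k) z (partial_fourier k N \<rho>)"
proof -
  have "partial_fourier k N (\<lambda>i. a i - z * b i) = (\<lambda>i. partial_fourier k N a i - z * partial_fourier k N b i)" for a b
    by (rule ext) (simp add: partial_fourier_def sum_subtractf sum_distrib_left algebra_simps)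
  then show ?thesis unfolding minus_scalar_def by (simp add: partial_fourier_gauged_magW[OF assms])
qed

lemma partial_fourier_outside:
  assumes "\<And>i. \<not> in_box N i \<Longrightarrow> \<rho> i = 0" "\<bar>x1\<bar> > N"
  shows "partial_fourier k N \<rho> (x1, s) = 0"
  unfolding partial_fourier_def using assms by (auto simp: in_box_def intro!: sum.neutral)

lemma l2norm_sq_in_box:
  fixes f :: "(int \<times> int) \<times> spin \<Rightarrow> complex"
  assumes "\<And>i. \<not> in_box N i \<Longrightarrow> f i = 0"
  shows "(l2norm f)\<^sup>2 = (\<Sum>j\<in>{-N..N} \<times> UNIV. \<Sum>x2\<in>{-N..N}. (cmod (f ((fst j, x2), snd j)))\<^sup>2)"
proof -
  define m where "m = (\<lambda>p::(int \<times> spin) \<times> int. ((fst (fst p), snd p), snd (fst p)))"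
  define D where "D = ({-N..N} \<times> (UNIV::spin set)) \<times> {-N..N}"
  have inj: "inj_on m D" by (auto simp: m_def inj_on_def D_def prod_eq_iff)
  have zero: "f i = 0" if "i \<notin> m ` D" for i
  proof (rule assms, rule notI)
    assume "in_box N i"
    then have "((fst (fst i), snd i), snd (fst i)) \<in> D" by (auto simp: in_box_def D_def)
    then show False using that by (force simp: m_def)
  qed
  have fin: "finite (m ` D)" by (simp add: D_def)
  have "(l2norm f)\<^sup>2 = (\<Sum>i\<in>m ` D. (cmod (f i))\<^sup>2)"
    using l2_finite_support(2)[OF fin zero] by (simp add: sum_nonneg)
  also have "\<dots> = (\<Sum>p\<in>D. (cmod (f (m p)))\<^sup>2)" by (rule sum.reindex[OF inj, unfolded comp_def])
  also have "\<dots> = (\<Sum>j\<in>{-N..N} \<times> UNIV. \<Sum>x2\<in>{-N..N}. (cmod (f ((fst j, x2), snd j)))\<^sup>2)"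
    unfolding D_def m_def by (simp add: sum.cartesian_product case_prod_beta)
  finally show ?thesis .
qed

lemma l2norm_sq_in_strip:
  fixes g :: "int \<times> spin \<Rightarrow> complex"
  assumes "\<And>x1 s. \<bar>x1\<bar> > N \<Longrightarrow> g (x1, s) = 0"
  shows "finite {i. g i \<noteq> 0}" "(l2norm g)\<^sup>2 = (\<Sum>j\<in>{-N..N} \<times> UNIV. (cmod (g j))\<^sup>2)"
proof -
  have zero: "g i = 0" if "i \<notin> {-N..N} \<times> UNIV" for i
    using assms[of "fst i" "snd i"] that by (cases i) auto
  have fin: "finite ({-N..N} \<times> (UNIV :: spin set))" by simp
  show "finite {i. g i \<noteq> 0}" using zero by (intro finite_subset[OF _ fin]) auto
  show "(l2norm g)\<^sup>2 = (\<Sum>j\<in>{-N..N} \<times> UNIV. (cmod (g j))\<^sup>2)"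
    using l2_finite_support(2)[OF fin zero] by (simp add: sum_nonneg)
qed

lemma parseval_partial_fourier:
  assumes "\<And>i. \<not> in_box N i \<Longrightarrow> \<rho> i = 0"
  shows "((\<lambda>k. (l2norm (partial_fourier k N \<rho>))\<^sup>2) has_integral (2 * pi * (l2norm \<rho>)\<^sup>2)) {0..2 * pi}"
proof -
  have "((\<lambda>k. \<Sum>j\<in>{-N..N} \<times> UNIV. (cmod (partial_fourier k N \<rho> j))\<^sup>2) has_integral
      (\<Sum>j\<in>{-N..N} \<times> UNIV. 2 * pi * (\<Sum>x2\<in>{-N..N}. (cmod (\<rho> ((fst j, x2), snd j)))\<^sup>2))) {0..2 * pi}"
    unfolding partial_fourier_def by (intro has_integral_sum parseval_trig_sum) simp_all
  moreover have "(l2norm (partial_fourier k N \<rho>))\<^sup>2 = (\<Sum>j\<in>{-N..N} \<times> UNIV. (cmod (partial_fourier k N \<rho> j))\<^sup>2)" for k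
    by (rule l2norm_sq_in_strip(2)) (rule partial_fourier_outside[OF assms])
  ultimately show ?thesis using l2norm_sq_in_box[OF assms] by (simp add: sum_distrib_left)
qed

lemma exists_less_of_integral_less:
  fixes A B :: "real \<Rightarrow> real"
  assumes "(A has_integral a) S" "(B has_integral b) S" "a < c * b"
  shows "\<exists>k\<in>S. A k < c * B k"
proof (rule ccontr)
  assume "\<not> (\<exists>k\<in>S. A k < c * B k)"
  then have "0 \<le> a - c * b"
    by (intro has_integral_nonneg[OF has_integral_diff[OF assms(1) has_integral_mult_right[OF assms(2)]]])
      (auto simp: not_less)
  with assms(3) show False by simp
qed

text \<open>By Parseval, \<open>\<integral>\<^sub>0\<^sup>2\<^sup>\<pi> \<parallel>(uamoW k - z) F\<^sub>k\<rho>\<parallel>\<^sup>2 dk < \<epsilon>\<^sup>2 \<integral>\<^sub>0\<^sup>2\<^sup>\<pi> \<parallel>F\<^sub>k\<rho>\<parallel>\<^sup>2 dk\<close>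
  for an approximate eigenvector \<open>\<rho>\<close> of \<open>gauged_magW\<close>, so some single phase \<open>k\<close> works.\<close>

lemma uamoW_some_phase_if_gauged:
  assumes ae: "finite_approx_eigenvalue (gauged_magW \<Phi>) z" and \<epsilon>: "\<epsilon> > 0"
  shows "\<exists>k g. finite {i. g i \<noteq> 0} \<and> (\<exists>i. g i \<noteq> 0) \<and> l2norm (minus_scalar (uamoW \<Phi> k) z g) \<le> \<epsilon> * l2norm g"
proof -
  obtain \<rho> i0 where \<rho>: "finite {i. \<rho> i \<noteq> 0}" "\<rho> i0 \<noteq> 0"
    "l2norm (minus_scalar (gauged_magW \<Phi>) z \<rho>) \<le> (\<epsilon> / 2) * l2norm \<rho>"
    using ae \<epsilon> unfolding finite_approx_eigenvalue_def by (meson half_gt_zero)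
  define \<sigma> where "\<sigma> = minus_scalar (gauged_magW \<Phi>) z \<rho>"
  have \<rho>_pos: "l2norm \<rho> > 0" by (rule l2norm_pos[OF finite_support_l2[OF \<rho>(1)] \<rho>(2)])
  obtain R where R: "R \<ge> 0" "\<And>i. \<not> in_box R i \<Longrightarrow> \<rho> i = 0" using finite_support_in_box[OF \<rho>(1)] by blast
  define N where "N = R + 1"
  have \<rho>_box: "\<rho> i = 0" if "\<not> in_box N i" for i using R(2)[of i] that by (auto simp: in_box_def N_def)
  have \<rho>_rows: "\<rho> i = 0" if "\<bar>snd (fst i)\<bar> \<ge> N" for i using R(2)[of i] that by (auto simp: in_box_def N_def)
  have \<sigma>_box: "\<sigma> i = 0" if "\<not> in_box N i" for i
    using gauged_magW_outside_box[OF R(2) that[unfolded N_def]] \<rho>_box[OF that] by (simp add: \<sigma>_def minus_scalar_def)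
  have "(l2norm \<sigma>)\<^sup>2 \<le> ((\<epsilon> / 2) * l2norm \<rho>)\<^sup>2"
    using \<rho>(3) by (intro power_mono) (simp_all add: \<sigma>_def l2norm_nonneg)
  also have "\<dots> < \<epsilon>\<^sup>2 * (l2norm \<rho>)\<^sup>2" using \<epsilon> \<rho>_pos by (simp add: power_mult_distrib power_divide)
  finally have less: "2 * pi * (l2norm \<sigma>)\<^sup>2 < \<epsilon>\<^sup>2 * (2 * pi * (l2norm \<rho>)\<^sup>2)" by simp
  have "((\<lambda>k. (l2norm (partial_fourier k N \<sigma>))\<^sup>2) has_integral (2 * pi * (l2norm \<sigma>)\<^sup>2)) {0..2 * pi}"
    and "((\<lambda>k. (l2norm (partial_fourier k N \<rho>))\<^sup>2) has_integral (2 * pi * (l2norm \<rho>)\<^sup>2)) {0..2 * pi}"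
    by (rule parseval_partial_fourier, fact)+
  then obtain k where k: "(l2norm (partial_fourier k N \<sigma>))\<^sup>2 < \<epsilon>\<^sup>2 * (l2norm (partial_fourier k N \<rho>))\<^sup>2"
    using exists_less_of_integral_less less by blast
  define g where "g = partial_fourier k N \<rho>"
  have g_minus: "minus_scalar (uamoW \<Phi> k) z g = partial_fourier k N \<sigma>"
    unfolding g_def \<sigma>_def by (rule partial_fourier_minus_scalar[OF \<rho>_rows, symmetric])
  have "(l2norm (minus_scalar (uamoW \<Phi> k) z g))\<^sup>2 < (\<epsilon> * l2norm g)\<^sup>2"
    using k unfolding g_minus by (simp add: g_def power_mult_distrib)
  then have "l2norm (minus_scalar (uamoW \<Phi> k) z g) < \<epsilon> * l2norm g"
    by (rule power2_less_imp_less) (use \<epsilon> l2norm_nonneg[of g] in simp)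
  moreover have "finite {i. g i \<noteq> 0}"
    unfolding g_def by (rule l2norm_sq_in_strip(1)) (rule partial_fourier_outside[OF \<rho>_box])
  moreover have "\<exists>i. g i \<noteq> 0"
  proof (rule ccontr)
    assume "\<not> (\<exists>i. g i \<noteq> 0)"
    then have "g = (\<lambda>i. 0)" by auto
    then show False using k by (simp add: g_def[symmetric] l2_zero)
  qed
  ultimately show ?thesis by (meson less_imp_le)
qed

theorem mainTheorem3:
  fixes \<Phi> \<theta> :: real
  assumes "0 \<le> \<Phi>" and "\<Phi> < 2 * pi"
    and "\<Phi> / (2 * pi) \<notin> \<rat>"
    and "0 \<le> \<theta>" and "\<theta> < 2 * pi"
  shows "op_spectrum (magW \<Phi>) = op_spectrum (uamoW \<Phi> \<theta>)"
proof (rule set_eqI)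
  fix z :: complex
  have "z \<in> op_spectrum (magW \<Phi>) \<longleftrightarrow> finite_approx_eigenvalue (magW \<Phi>) z"
    by (rule op_spectrum_iff_finite_approx_eigenvalue[OF regular_op_magW magW_inverse])
  also have "\<dots> \<longleftrightarrow> finite_approx_eigenvalue (gauged_magW \<Phi>) z"
    by (rule finite_approx_eigenvalue_magW_iff_gauged)
  also have "\<dots> \<longleftrightarrow> finite_approx_eigenvalue (uamoW \<Phi> \<theta>) z"
    using finite_approx_eigenvalue_uamoW_of_some_phases[OF assms(3)] uamoW_some_phase_if_gauged
      finite_approx_eigenvalue_gauged_if_uamoW
    by blast
  also have "\<dots> \<longleftrightarrow> z \<in> op_spectrum (uamoW \<Phi> \<theta>)"
    by (rule op_spectrum_iff_finite_approx_eigenvalue[OF regular_op_uamoW uamoW_inverse, symmetric])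
  finally show "z \<in> op_spectrum (magW \<Phi>) \<longleftrightarrow> z \<in> op_spectrum (uamoW \<Phi> \<theta>)" .
qed

end
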